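(* Consider the algorithm LaCAM$^\ast$ described in the context below, run without interruption, on an MAPF instance $(G,A,\mathcal{S},\mathcal{G})$ with a nonnegative transition cost $c_e$ and an admissible heuristic $h$, using any agent-ordering rule and any valid configuration generator. Then the algorithm terminates after finitely many iterations, and: if the instance has a solution, it returns a solution $\Pi$ that is optimal, i.e. $c(\Pi)\le c(\Pi')$ for every solution $\Pi'$; if the instance has no solution, it returns NO_SOLUTION. (That is, LaCAM$^\ast$ is complete and optimal.)
   Context: **MAPF.** $G=(V,E)$ is a finite undirected graph; $N(v)$ denotes the set of neighbours of $v\in V$. Agents are $A=\{1,\dots,n\}$; starts $\mathcal{S}=(s_1,\dots,s_n)$ and goals $\mathcal{G}=(g_1,\dots,g_n)$ are tuples of pairwise distinct vertices. A configuration is $Q\in V^n$, $Q[i]$ being the location of agent $i$. Configurations $X,Y$ are *connected* if $Y[i]\in N(X[i])\cup\{X[i]\}$ for all $i$, there is no $i\ne j$ with $Y[i]=Y[j]$ or $X[i]=X[j]$ (no vertex collision), and there is no $i\neq j$ with $X[i]=Y[j]$ and $Y[i]=X[j]$ (no edge collision). A *solution* is a sequence $\Pi=(Q_0,\dots,Q_k)$ with $Q_0=\mathcal{S}$, $Q_k=\mathcal{G}$ and $Q_t,Q_{t+1}$ connected for all $t$. Given a transition cost $c_e:V^n\times V^n\to\mathbb{R}_{\ge0}$, the cost of $\Pi$ is $c(\Pi)=\sum_{t=0}^{k-1}c_e(Q_t,Q_{t+1})$. A heuristic $h:V^n\to\mathbb{R}_{\ge 0}$ is *admissible* if $h(Q)$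 is at most the minimum cost of a sequence of consecutively connected configurations from $Q$ to $\mathcal{G}$ (for every $Q$ from which $\mathcal{G}$ is reachable; in particular $h(\mathcal{G})=0$). **Constraints.** A constraint node $C$ is either the root $C_{\mathrm{init}}$ or a triple $\langle \mathrm{parent}:C',\ \mathrm{who}:i,\ \mathrm{where}:u\rangle$ with $C'$ a constraint node, $i\in A$, $u\in V$. The constraint set of $C$ is the set of pairs $(i,u)$ collected along the parent chain to the root; $\mathrm{depth}(C)$ is its size ($\mathrm{depth}(C_{\mathrm{init}})=0$). **Ingredients.** An *agent-ordering rule* assigns to each generated high-level node an arbitrary permutation $\mathrm{order}$ of $A$. A *valid configuration generator* is a function that, given a configuration $Q$ and a constraint node $C$, returns either $\bot$ or a configuration $Q'$ connected to $Q$ with $Q'[i]=u$ for all $(i,u)$ in the constraint set of $C$; moreover, whenever the constraint set of $C$ assigns a location to every agent and the resulting configuration is connected to $Q$, it does not return $\bot$ (hence returns exactly that configuration). **High-level nodes.** A node $\mathcal{N}$ stores: $\mathrm{config}$ (a configuration), $\mathrm{tree}$ (a FIFO queue of constraint nodes), $\mathrm{parent}$ (a node or $\bot$), $\mathrm{neighbors}$ (a list of nodes), $g\in\mathbb{R}_{\ge0}$, and $\mathrm{order}$. Write $f(\mathcal{N})=\mathcal{N}.g+h(\mathcal{N}.\mathrm{config})$ and $c_e(\mathcal{N},\mathcal{N}')=c_e(\mathcal{N}.\mathrm{config},\mathcal{N}'.\mathrm{config})$. **Algorithm LaCAM$^\ast$.** OPEN is a stack (LIFO), EXPLORED a map from configurations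 to nodes, $\mathcal{N}_{\mathrm{goal}}:=\bot$. Create $\mathcal{N}_{\mathrm{init}}$ with config $\mathcal{S}$, tree $[C_{\mathrm{init}}]$, parent $\bot$, neighbors $\emptyset$, $g=0$; push it on OPEN and set EXPLORED$[\mathcal{S}]=\mathcal{N}_{\mathrm{init}}$. While OPEN is nonempty: 1. Let $\mathcal{N}$ be the top of OPEN (not removed). If $\mathcal{N}.\mathrm{config}=\mathcal{G}$, set $\mathcal{N}_{\mathrm{goal}}:=\mathcal{N}$. 2. If $\mathcal{N}_{\mathrm{goal}}\ne\bot$ and $f(\mathcal{N}_{\mathrm{goal}})\le f(\mathcal{N})$, pop OPEN and continue. 3. If $\mathcal{N}.\mathrm{tree}$ is empty, pop OPEN and continue. 4. Dequeue $C$ from $\mathcal{N}.\mathrm{tree}$. If $\mathrm{depth}(C)<n$, let $i=\mathcal{N}.\mathrm{order}[\mathrm{depth}(C)+1]$ and, for each $u\in N(\mathcal{N}.\mathrm{config}[i])\cup\{\mathcal{N}.\mathrm{config}[i]\}$, enqueue $\langle C,i,u\rangle$ into $\mathcal{N}.\mathrm{tree}$. 5. Let $Q_{\mathrm{new}}$ be the generator's output on $(\mathcal{N}.\mathrm{config},C)$; if $\bot$, continue. 6. If EXPLORED$[Q_{\mathrm{new}}]$ is defined: append it to $\mathcal{N}.\mathrm{neighbors}$; then run a Dijkstra update: $D$ is a min-priority queue on $g$ initialized with $\mathcal{N}$; while $D\ne\emptyset$, pop $\mathcal{N}_{\mathrm{from}}$ and for each $\mathcal{N}_{\mathrm{to}}\in\mathcal{N}_{\mathrm{from}}.\mathrm{neighbors}$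 let $g'=\mathcal{N}_{\mathrm{from}}.g+c_e(\mathcal{N}_{\mathrm{from}},\mathcal{N}_{\mathrm{to}})$; if $g'<\mathcal{N}_{\mathrm{to}}.g$, set $\mathcal{N}_{\mathrm{to}}.g:=g'$, $\mathcal{N}_{\mathrm{to}}.\mathrm{parent}:=\mathcal{N}_{\mathrm{from}}$, push $\mathcal{N}_{\mathrm{to}}$ into $D$, and if moreover $\mathcal{N}_{\mathrm{goal}}\neq\bot$ and $f(\mathcal{N}_{\mathrm{to}})<f(\mathcal{N}_{\mathrm{goal}})$, push $\mathcal{N}_{\mathrm{to}}$ onto OPEN. 7. Otherwise create $\mathcal{N}_{\mathrm{new}}$ with config $Q_{\mathrm{new}}$, tree $[C_{\mathrm{init}}]$, parent $\mathcal{N}$, neighbors $\emptyset$, $g=\mathcal{N}.g+c_e(\mathcal{N}.\mathrm{config},Q_{\mathrm{new}})$, order given by the ordering rule; push it on OPEN, set EXPLORED$[Q_{\mathrm{new}}]=\mathcal{N}_{\mathrm{new}}$, and append $\mathcal{N}_{\mathrm{new}}$ to $\mathcal{N}.\mathrm{neighbors}$. When OPEN is empty: if $\mathcal{N}_{\mathrm{goal}}\ne\bot$, return the sequence of configurations obtained by following parent pointers from $\mathcal{N}_{\mathrm{goal}}$ back to $\mathcal{N}_{\mathrm{init}}$, reversed; otherwise return NO_SOLUTION. *)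

theory Defs
  imports Complex_Main
begin

(* Agents are 0..n-1 (paper: 1..n); configurations are lists of length n;
   the vertex set V is the (finite) type 'v; adj is the (symmetric) edge relation,
   N(v) = {u. adj v u}.  A constraint node is represented by the list of pairs
   (who, where) along its chain from the root (root = []), so its depth is the length. *)

type_synonym 'v config = "'v list"
type_synonym 'v constr = "(nat \<times> 'v) list"

definition connected :: "nat \<Rightarrow> ('v \<Rightarrow> 'v \<Rightarrow> bool) \<Rightarrow> 'v config \<Rightarrow> 'v config \<Rightarrow> bool" where
  "connected n adj X Y \<longleftrightarrow> length X = n \<and> length Y = n \<and>
     (\<forall>i<n. Y!i \<in> {u. adj (X!i) u} \<union> {X!i}) \<and>
     (\<forall>i<n. \<forall>j<n. i \<noteq> j \<longrightarrow> Y!i \<noteq> Y!j \<and> X!i \<noteq> X!j) \<and>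
     (\<forall>i<n. \<forall>j<n. i \<noteq> j \<longrightarrow> \<not> (X!i = Y!j \<and> Y!i = X!j))"

definition is_path :: "nat \<Rightarrow> ('v \<Rightarrow> 'v \<Rightarrow> bool) \<Rightarrow> 'v config list \<Rightarrow> bool" where
  "is_path n adj P \<longleftrightarrow> P \<noteq> [] \<and> (\<forall>t. Suc t < length P \<longrightarrow> connected n adj (P!t) (P!Suc t))"

definition is_solution :: "nat \<Rightarrow> ('v \<Rightarrow> 'v \<Rightarrow> bool) \<Rightarrow> 'v config \<Rightarrow> 'v config \<Rightarrow> 'v config list \<Rightarrow> bool" where
  "is_solution n adj S G P \<longleftrightarrow> is_path n adj P \<and> hd P = S \<and> last P = G"

definition path_cost :: "('v config \<Rightarrow> 'v config \<Rightarrow> real) \<Rightarrow> 'v config list \<Rightarrow> real" where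
  "path_cost c P = (\<Sum>t<length P - 1. c (P!t) (P!Suc t))"

definition admissible :: "nat \<Rightarrow> ('v \<Rightarrow> 'v \<Rightarrow> bool) \<Rightarrow> 'v config \<Rightarrow> ('v config \<Rightarrow> 'v config \<Rightarrow> real) \<Rightarrow> ('v config \<Rightarrow> real) \<Rightarrow> bool" where
  "admissible n adj G c h \<longleftrightarrow>
     (\<forall>Q P. is_path n adj P \<and> hd P = Q \<and> last P = G \<longrightarrow> h Q \<le> path_cost c P)"

definition valid_generator :: "nat \<Rightarrow> ('v \<Rightarrow> 'v \<Rightarrow> bool) \<Rightarrow> ('v config \<Rightarrow> 'v constr \<Rightarrow> 'v config option) \<Rightarrow> bool" where
  "valid_generator n adj gen \<longleftrightarrow>
     (\<forall>Q C Q'. length Q = n \<longrightarrow> (\<forall>(i,u)\<in>set C. i < n) \<longrightarrow> gen Q C = Some Q' \<longrightarrow>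
        connected n adj Q Q' \<and> (\<forall>(i,u)\<in>set C. Q'!i = u)) \<and>
     (\<forall>Q C Q'. length Q = n \<longrightarrow> (\<forall>(i,u)\<in>set C. i < n) \<longrightarrow> (\<forall>i<n. \<exists>u. (i,u) \<in> set C) \<longrightarrow>
        connected n adj Q Q' \<longrightarrow> (\<forall>(i,u)\<in>set C. Q'!i = u) \<longrightarrow> gen Q C \<noteq> None)"

(* High-level nodes; a node is identified with its configuration (EXPLORED is injective). *)
record 'v hnode =
  tree :: "'v constr list"          (* FIFO queue: dequeue at head, enqueue at end *)
  par :: "'v config option"
  nbrs :: "'v config list"
  gval :: real
  ordr :: "nat list"                (* order[k+1] of the paper is ordr ! k *)

(* Algorithm state: EXPLORED (with node data), OPEN (stack, top = head), N_goal,
   and the state of the Dijkstra update loop (flag + priority queue of (node, key)). *)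
record 'v lstate =
  nodes :: "'v config \<Rightarrow> 'v hnode option"
  opn :: "'v config list"
  goal :: "'v config option"
  in_dijk :: bool
  dq :: "('v config \<times> real) list"

definition gof :: "'v lstate \<Rightarrow> 'v config \<Rightarrow> real" where
  "gof s q = gval (the (nodes s q))"

definition fof :: "('v config \<Rightarrow> real) \<Rightarrow> 'v lstate \<Rightarrow> 'v config \<Rightarrow> real" where
  "fof h s q = gof s q + h q"

(* the body of the Dijkstra loop for one popped node N_from, processing its
   neighbor list in order *)
fun relax :: "('v config \<Rightarrow> 'v config \<Rightarrow> real) \<Rightarrow> ('v config \<Rightarrow> real) \<Rightarrow> 'v config
              \<Rightarrow> 'v config list \<Rightarrow> 'v lstate \<Rightarrow> 'v lstate" where
  "relax c h fr [] s = s"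
| "relax c h fr (t # ts) s =
     relax c h fr ts
       (let g' = gof s fr + c fr t in
        if g' < gof s t then
          (let s1 = s\<lparr>nodes := (nodes s)(t \<mapsto> (the (nodes s t))\<lparr>gval := g', par := Some fr\<rparr>),
                      dq := (t, g') # dq s\<rparr>
           in if (\<exists>qg. goal s1 = Some qg \<and> fof h s1 t < fof h s1 qg)
              then s1\<lparr>opn := t # opn s1\<rparr> else s1)
        else s)"

definition init_state :: "'v config \<Rightarrow> nat list \<Rightarrow> 'v lstate" where
  "init_state S o0 = \<lparr>nodes = [S \<mapsto> \<lparr>tree = [[]], par = None, nbrs = [], gval = 0, ordr = o0\<rparr>],
                      opn = [S], goal = None, in_dijk = False, dq = []\<rparr>"

definition expand_tree :: "nat \<Rightarrow> ('v \<Rightarrow> 'v \<Rightarrow> bool) \<Rightarrow> 'v config \<Rightarrow> nat list \<Rightarrow> 'v constr \<Rightarrow> 'v list \<Rightarrow> bool" where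
  "expand_tree n adj q ord C us \<longleftrightarrow>
     (length C < n \<longrightarrow> distinct us \<and> set us = {u. adj (q ! (ord ! length C)) u} \<union> {q ! (ord ! length C)})"

definition new_children :: "nat \<Rightarrow> nat list \<Rightarrow> 'v constr \<Rightarrow> 'v list \<Rightarrow> 'v constr list" where
  "new_children n ord C us = (if length C < n then map (\<lambda>u. C @ [(ord ! length C, u)]) us else [])"

(* One iteration (main loop iteration up to the call of the Dijkstra update, or one
   pop of the Dijkstra priority queue). Nondeterminism: enumeration order of
   neighbours, ordering rule, tie-breaking in the priority queue. *)
inductive lstep :: "nat \<Rightarrow> ('v \<Rightarrow> 'v \<Rightarrow> bool) \<Rightarrow> 'v config \<Rightarrow> ('v config \<Rightarrow> 'v config \<Rightarrow> real)
                   \<Rightarrow> ('v config \<Rightarrow> real) \<Rightarrow> ('v config \<Rightarrow> 'v constr \<Rightarrow> 'v config option)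
                   \<Rightarrow> 'v lstate \<Rightarrow> 'v lstate \<Rightarrow> bool"
  for n adj G c h gen where
  pop_goal:
    "\<lbrakk> \<not> in_dijk s; opn s = q # rest;
       gl = (if q = G then Some q else goal s);
       gl = Some qg; fof h s qg \<le> fof h s q \<rbrakk>
     \<Longrightarrow> lstep n adj G c h gen s (s\<lparr>opn := rest, goal := gl\<rparr>)"
| pop_empty:
    "\<lbrakk> \<not> in_dijk s; opn s = q # rest;
       gl = (if q = G then Some q else goal s);
       \<not> (\<exists>qg. gl = Some qg \<and> fof h s qg \<le> fof h s q);
       tree (the (nodes s q)) = [] \<rbrakk>
     \<Longrightarrow> lstep n adj G c h gen s (s\<lparr>opn := rest, goal := gl\<rparr>)"
| gen_none:
    "\<lbrakk> \<not> in_dijk s; opn s = q # rest;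
       gl = (if q = G then Some q else goal s);
       \<not> (\<exists>qg. gl = Some qg \<and> fof h s qg \<le> fof h s q);
       nd = the (nodes s q); tree nd = C # Cs;
       expand_tree n adj q (ordr nd) C us;
       gen q C = None \<rbrakk>
     \<Longrightarrow> lstep n adj G c h gen s
          (s\<lparr>goal := gl, nodes := (nodes s)(q \<mapsto> nd\<lparr>tree := Cs @ new_children n (ordr nd) C us\<rparr>)\<rparr>)"
| gen_explored:
    "\<lbrakk> \<not> in_dijk s; opn s = q # rest;
       gl = (if q = G then Some q else goal s);
       \<not> (\<exists>qg. gl = Some qg \<and> fof h s qg \<le> fof h s q);
       nd = the (nodes s q); tree nd = C # Cs;
       expand_tree n adj q (ordr nd) C us;
       gen q C = Some Q'; nodes s Q' \<noteq> None \<rbrakk>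
     \<Longrightarrow> lstep n adj G c h gen s
          (s\<lparr>goal := gl,
             nodes := (nodes s)(q \<mapsto> nd\<lparr>tree := Cs @ new_children n (ordr nd) C us,
                                        nbrs := nbrs nd @ [Q']\<rparr>),
             in_dijk := True, dq := [(q, gval nd)]\<rparr>)"
| gen_new:
    "\<lbrakk> \<not> in_dijk s; opn s = q # rest;
       gl = (if q = G then Some q else goal s);
       \<not> (\<exists>qg. gl = Some qg \<and> fof h s qg \<le> fof h s q);
       nd = the (nodes s q); tree nd = C # Cs;
       expand_tree n adj q (ordr nd) C us;
       gen q C = Some Q'; nodes s Q' = None;
       distinct o'; set o' = {..<n} \<rbrakk>
     \<Longrightarrow> lstep n adj G c h gen s
          (s\<lparr>goal := gl,
             nodes := ((nodes s)(q \<mapsto> nd\<lparr>tree := Cs @ new_children n (ordr nd) C us,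
                                         nbrs := nbrs nd @ [Q']\<rparr>))
                      (Q' \<mapsto> \<lparr>tree = [[]], par = Some q, nbrs = [],
                              gval = gval nd + c q Q', ordr = o'\<rparr>),
             opn := Q' # opn s\<rparr>)"
| dijk_pop:
    "\<lbrakk> in_dijk s; (q, k) \<in> set (dq s); \<forall>(q', k') \<in> set (dq s). k \<le> k' \<rbrakk>
     \<Longrightarrow> lstep n adj G c h gen s
          (relax c h q (nbrs (the (nodes s q))) (s\<lparr>dq := remove1 (q, k) (dq s)\<rparr>))"
| dijk_end:
    "\<lbrakk> in_dijk s; dq s = [] \<rbrakk> \<Longrightarrow> lstep n adj G c h gen s (s\<lparr>in_dijk := False\<rparr>)"

definition is_final :: "'v lstate \<Rightarrow> bool" where
  "is_final s \<longleftrightarrow> \<not> in_dijk s \<and> opn s = []"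

definition returned_path :: "'v lstate \<Rightarrow> 'v config list \<Rightarrow> bool" where
  "returned_path s P \<longleftrightarrow> P \<noteq> [] \<and> goal s = Some (last P) \<and>
     nodes s (hd P) \<noteq> None \<and> par (the (nodes s (hd P))) = None \<and>
     (\<forall>t. Suc t < length P \<longrightarrow> nodes s (P ! Suc t) \<noteq> None \<and>
                                  par (the (nodes s (P ! Suc t))) = Some (P ! t))"

end

theory Submission
  imports Defs
begin

text \<open>
  Termination: each step of the search either consumes a constraint of some node's constraint
  tree, where a constraint of depth \<open>d\<close> weighs \<open>(|V| + 1) ^ (n - d)\<close> and so outweighs all its
  children, with a newly explored configuration paying for its fresh tree out of the finitely
  many unexplored ones; or it strictly lowers a g-value, and g-values are sums of positive
  step costs, of which only finitely many lie below any bound; or it shrinks the Dijkstra queue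
  or OPEN. These four quantities, ordered lexicographically, are well founded.

  Completeness and optimality: throughout the search, every configuration one step away from an
  explored node is a recorded neighbour of it or still lies below a queued constraint of its
  constraint tree; a node that has left OPEN is fully expanded unless the goal already has no
  larger f-value; and outside the Dijkstra update, g is consistent along recorded edges. In a
  final state, walking along any solution therefore stays among explored nodes whose g is at
  most the cost of the prefix walked, until a node pruned by the goal is met, where admissibility
  of h bounds g of the goal by the cost of the whole solution. The parent pointers from the goal
  trace a solution of cost at most that g-value.
\<close>

section \<open>Sums of positive weights\<close>

definition list_sums :: "('a \<Rightarrow> real) \<Rightarrow> 'a set \<Rightarrow> real set" where
  "list_sums w E = {sum_list (map w es) | es. set es \<subseteq> E}"

lemma zero_in_list_sums: "0 \<in> list_sums w E"
  unfolding list_sums_def by (auto intro!: exI[of _ "[]"])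

lemma list_sums_add:
  assumes "v \<in> list_sums w E" and "e \<in> E"
  shows "v + w e \<in> list_sums w E"
proof -
  obtain es where "v = sum_list (map w es)" and "set es \<subseteq> E"
    using assms(1) unfolding list_sums_def by blast
  then show ?thesis
    using assms(2) unfolding list_sums_def by (auto intro!: exI[of _ "es @ [e]"])
qed

lemma list_sums_nonneg: "(\<And>e. e \<in> E \<Longrightarrow> 0 \<le> w e) \<Longrightarrow> v \<in> list_sums w E \<Longrightarrow> 0 \<le> v"
  unfolding list_sums_def by (fastforce intro!: sum_list_nonneg)

lemma finite_list_sums_below:
  assumes fin: "finite E" and pos: "\<And>e. e \<in> E \<Longrightarrow> 0 < w e"
  shows "finite {v \<in> list_sums w E. v < B}"
proof -
  define eps where "eps = (if E = {} then 1 else Min (w ` E))"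
  have eps_pos: "0 < eps"
    using fin pos by (auto simp: eps_def)
  have eps_le: "e \<in> E \<Longrightarrow> eps \<le> w e" for e
    using fin by (auto simp: eps_def)
  have length_bound: "real (length es) * eps \<le> sum_list (map w es)" if "set es \<subseteq> E" for es
    using that by (induction es) (auto simp: algebra_simps intro: add_mono eps_le)
  define N where "N = nat \<lceil>B / eps\<rceil>"
  have "{v \<in> list_sums w E. v < B} \<subseteq> (\<lambda>es. sum_list (map w es)) ` {es. set es \<subseteq> E \<and> length es \<le> N}"
  proof
    fix v assume "v \<in> {v \<in> list_sums w E. v < B}"
    then obtain es where es: "v = sum_list (map w es)" "set es \<subseteq> E" "v < B"
      unfolding list_sums_def by auto
    have "real (length es) * eps < B"
      using length_bound[OF es(2)] es by simp
    then have "real (length es) < B / eps"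
      using eps_pos by (simp add: field_simps)
    then have "length es \<le> N"
      unfolding N_def by linarith
    then show "v \<in> (\<lambda>es. sum_list (map w es)) ` {es. set es \<subseteq> E \<and> length es \<le> N}"
      using es by auto
  qed
  then show ?thesis
    using finite_lists_length_le[OF fin] finite_subset by blast
qed

lemma path_cost_snoc:
  assumes "P \<noteq> []"
  shows "path_cost c (P @ [x]) = path_cost c P + c (last P) x"
proof -
  obtain m where m: "length P = Suc m"
    using assms by (cases P) auto
  have "path_cost c (P @ [x]) = (\<Sum>t<m. c (P!t) (P!Suc t)) + c (P!m) x"
    unfolding path_cost_def using m by (simp add: nth_append)
  then show ?thesis
    using m assms by (simp add: path_cost_def last_conv_nth)
qed

lemma path_cost_take_Suc:
  assumes "Suc i < length P"
  shows "path_cost c (take (Suc (Suc i)) P) = path_cost c (take (Suc i) P) + c (P!i) (P!Suc i)"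
proof -
  have "take (Suc i) P \<noteq> []"
    using assms by (cases P) simp_all
  then show ?thesis
    using assms path_cost_snoc[of "take (Suc i) P" c "P!Suc i"]
    by (simp add: take_Suc_conv_app_nth[of "Suc i"] last_conv_nth)
qed

lemma path_cost_take_drop:
  assumes "i < length P"
  shows "path_cost c P = path_cost c (take (Suc i) P) + path_cost c (drop i P)"
proof -
  have split: "(\<Sum>t<a + b. f t) = (\<Sum>t<a. f t) + (\<Sum>t<b. f (a + t))" for a b and f :: "nat \<Rightarrow> real"
    by (induction b) (simp_all add: add.assoc)
  have len: "i + (length P - 1 - i) = length P - 1"
    using assms by simp
  have "path_cost c P = (\<Sum>t<i. c (P!t) (P!Suc t)) + (\<Sum>t<length P - 1 - i. c (P!(i+t)) (P!Suc (i+t)))"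
    unfolding path_cost_def using split[where a = i and b = "length P - 1 - i" and f = "\<lambda>t. c (P!t) (P!Suc t)"]
    by (simp only: len)
  then show ?thesis
    using assms unfolding path_cost_def by (simp add: min_def)
qed

lemma is_path_drop: "is_path n adj P \<Longrightarrow> i < length P \<Longrightarrow> is_path n adj (drop i P)"
  unfolding is_path_def by (auto simp: add.commute)

lemma is_path_snoc:
  assumes P: "is_path n adj P" and x: "connected n adj (last P) x"
  shows "is_path n adj (P @ [x])"
  unfolding is_path_def
proof (intro conjI allI impI)
  fix t assume t: "Suc t < length (P @ [x])"
  show "connected n adj ((P @ [x]) ! t) ((P @ [x]) ! Suc t)"
  proof (cases "Suc t < length P")
    case True
    then show ?thesis using P unfolding is_path_def by (simp add: nth_append)
  next
    case False
    then have "t = length P - 1" and "Suc t = length P" using t by simp_all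
    moreover have "P \<noteq> []" using P unfolding is_path_def by simp
    ultimately show ?thesis using x by (simp add: nth_append last_conv_nth)
  qed
qed simp

section \<open>Constraint trees\<close>

definition constr_weight :: "nat \<Rightarrow> 'v::finite constr \<Rightarrow> nat" where
  "constr_weight n C = (card (UNIV :: 'v set) + 1) ^ (n - length C)"

definition queue_weight :: "nat \<Rightarrow> 'v::finite constr list \<Rightarrow> nat" where
  "queue_weight n Cs = sum_list (map (constr_weight n) Cs)"

lemma queue_weight_new_children_less:
  fixes us :: "'v::finite list"
  assumes "expand_tree n adj q ord C us"
  shows "queue_weight n (new_children n ord C us) < constr_weight n C"
proof (cases "length C < n")
  case True
  let ?m = "card (UNIV :: 'v set)"
  have "length us = card (set us)"
    using assms True distinct_card[of us] unfolding expand_tree_def by simp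
  also have "\<dots> \<le> ?m"
    by (rule card_mono) auto
  finally have "length us \<le> ?m" .
  then have "queue_weight n (new_children n ord C us) \<le> ?m * (?m + 1) ^ (n - Suc (length C))"
    using True by (simp add: queue_weight_def new_children_def constr_weight_def o_def sum_list_triv)
  also have "\<dots> < (?m + 1) ^ (n - length C)"
    using True by (simp add: Suc_diff_Suc[symmetric])
  finally show ?thesis
    unfolding constr_weight_def .
qed (simp add: queue_weight_def new_children_def constr_weight_def)

text \<open>The leaf of the constraint tree, under agent order \<open>ord\<close>, that pins every agent to its
  place in \<open>Y\<close>; the constraints on the way to it are its prefixes.\<close>

definition branch :: "nat list \<Rightarrow> 'v config \<Rightarrow> 'v constr" where
  "branch ord Y = map (\<lambda>i. (i, Y ! i)) ord"

lemma take_branch_Suc: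
  "k < length ord \<Longrightarrow> take (Suc k) (branch ord Y) = take k (branch ord Y) @ [(ord ! k, Y ! (ord ! k))]"
  unfolding branch_def by (simp add: take_Suc_conv_app_nth)

lemma new_children_indices:
  assumes "map fst C = take (length C) ord" and "C' \<in> set (new_children n ord C us)"
    and "length ord = n"
  shows "map fst C' = take (length C') ord"
proof -
  obtain u where "length C < n" and "C' = C @ [(ord ! length C, u)]"
    using assms(2) unfolding new_children_def by (auto split: if_splits)
  then show ?thesis
    using assms(1,3) by (simp add: take_Suc_conv_app_nth)
qed

lemma new_children_branch:
  assumes C: "C = take (length C) (branch ord Y)" and ord: "set ord = {..<n}" "length ord = n"
    and lt: "length C < n" and us: "expand_tree n adj q ord C us" and Y: "connected n adj q Y"
  shows "take (Suc (length C)) (branch ord Y) \<in> set (new_children n ord C us)"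
proof -
  let ?i = "ord ! length C"
  have "?i < n"
    using ord lt by (metis lessThan_iff nth_mem)
  then have "Y ! ?i \<in> set us"
    using us Y lt unfolding expand_tree_def connected_def by blast
  moreover have "take (Suc (length C)) (branch ord Y) = C @ [(?i, Y ! ?i)]"
    using take_branch_Suc[of "length C" ord Y] C ord lt by simp
  ultimately show ?thesis
    using lt unfolding new_children_def by auto
qed

lemma ex_expand_tree: "\<exists>us :: 'v::finite list. expand_tree n adj q ord C us"
  using finite_distinct_list[of "{u. adj (q ! (ord ! length C)) u} \<union> {q ! (ord ! length C)}"]
  unfolding expand_tree_def by auto

section \<open>Progress\<close>

lemma lstep_dijkstra_progress:
  assumes "in_dijk s"
  shows "\<exists>s'. lstep n adj G c h gen s s'"
proof (cases "dq s")
  case Nil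
  then show ?thesis
    using lstep.dijk_end[OF assms] by blast
next
  case (Cons e es)
  define k where "k = Min (snd ` set (dq s))"
  have "k \<in> snd ` set (dq s)"
    unfolding k_def using Cons by (intro Min_in) auto
  then obtain q where "(q, k) \<in> set (dq s)"
    by force
  moreover have "\<forall>(q', k') \<in> set (dq s). k \<le> k'"
    unfolding k_def by (auto intro!: Min_le rev_image_eqI)
  ultimately show ?thesis
    using lstep.dijk_pop[OF assms] by blast
qed

lemma lstep_search_progress:
  fixes adj :: "'v::finite \<Rightarrow> 'v \<Rightarrow> bool"
  assumes not_dijk: "\<not> in_dijk s" and o: "opn s = q # rest"
  shows "\<exists>s'. lstep n adj G c h gen s s'"
proof -
  define gl where "gl = (if q = G then Some q else goal s)"
  consider (pruned) "\<exists>qg. gl = Some qg \<and> fof h s qg \<le> fof h s q"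
    | (empty) "\<not> (\<exists>qg. gl = Some qg \<and> fof h s qg \<le> fof h s q)" "tree (the (nodes s q)) = []"
    | (expand) C Cs where "\<not> (\<exists>qg. gl = Some qg \<and> fof h s qg \<le> fof h s q)"
        "tree (the (nodes s q)) = C # Cs"
    by (cases "tree (the (nodes s q))") auto
  then show ?thesis
  proof cases
    case pruned
    then show ?thesis
      using lstep.pop_goal[OF not_dijk o gl_def] by blast
  next
    case empty
    then show ?thesis
      using lstep.pop_empty[OF not_dijk o gl_def] by blast
  next
    case expand
    obtain us where us: "expand_tree n adj q (ordr (the (nodes s q))) C us"
      using ex_expand_tree by blast
    obtain o' :: "nat list" where o': "distinct o'" "set o' = {..<n}"
      using finite_distinct_list[of "{..<n}"] by auto
    show ?thesis
    proof (cases "gen q C")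
      case None
      then show ?thesis
        using lstep.gen_none[where gen = gen, OF not_dijk o gl_def expand(1) refl expand(2) us] by blast
    next
      case (Some Q')
      show ?thesis
      proof (cases "nodes s Q' = None")
        case True
        then show ?thesis
          using lstep.gen_new[where gen = gen, OF not_dijk o gl_def expand(1) refl expand(2) us Some True o'(1) o'(2)] by blast
      next
        case False
        then show ?thesis
          using lstep.gen_explored[where gen = gen, OF not_dijk o gl_def expand(1) refl expand(2) us Some False] by blast
      qed
    qed
  qed
qed

lemma lstep_progress:
  fixes adj :: "'v::finite \<Rightarrow> 'v \<Rightarrow> bool"
  shows "is_final s \<or> (\<exists>s'. lstep n adj G c h gen s s')"
proof (cases "opn s")
  case Nil
  then show ?thesis
    using lstep_dijkstra_progress[of s] unfolding is_final_def by blast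
next
  case (Cons q rest)
  then show ?thesis
    using lstep_dijkstra_progress[of s] lstep_search_progress[of s q rest] by blast
qed

definition parent_chain :: "'v lstate \<Rightarrow> 'v config list \<Rightarrow> bool" where
  "parent_chain s P \<longleftrightarrow> P \<noteq> [] \<and> nodes s (hd P) \<noteq> None \<and> par (the (nodes s (hd P))) = None \<and>
     (\<forall>t. Suc t < length P \<longrightarrow> nodes s (P ! Suc t) \<noteq> None \<and> par (the (nodes s (P ! Suc t))) = Some (P ! t))"

lemma returned_path_iff: "returned_path s P \<longleftrightarrow> parent_chain s P \<and> goal s = Some (last P)"
  unfolding returned_path_def parent_chain_def by auto

lemma parent_chain_snoc:
  assumes P: "parent_chain s P" and x: "nodes s x \<noteq> None" and px: "par (the (nodes s x)) = Some (last P)"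
  shows "parent_chain s (P @ [x])"
proof -
  have ne: "P \<noteq> []"
    using P unfolding parent_chain_def by simp
  have "nodes s ((P @ [x]) ! Suc t) \<noteq> None \<and> par (the (nodes s ((P @ [x]) ! Suc t))) = Some ((P @ [x]) ! t)"
    if t: "Suc t < length (P @ [x])" for t
  proof (cases "Suc t < length P")
    case True
    then show ?thesis
      using P unfolding parent_chain_def by (simp add: nth_append)
  next
    case False
    then have "t = length P - 1" and "Suc t = length P"
      using t by simp_all
    then show ?thesis
      using x px ne by (simp add: nth_append last_conv_nth)
  qed
  then show ?thesis
    using P ne unfolding parent_chain_def by simp
qed

locale lacam =
  fixes adj :: "'v::finite \<Rightarrow> 'v \<Rightarrow> bool" and n :: nat and S G :: "'v config"
    and c :: "'v config \<Rightarrow> 'v config \<Rightarrow> real" and h :: "'v config \<Rightarrow> real"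
    and gen :: "'v config \<Rightarrow> 'v constr \<Rightarrow> 'v config option"
  assumes length_S: "length S = n" and length_G: "length G = n"
    and cost_nonneg: "\<And>X Y. length X = n \<Longrightarrow> length Y = n \<Longrightarrow> 0 \<le> c X Y"
    and heuristic_nonneg: "\<And>Q. length Q = n \<Longrightarrow> 0 \<le> h Q"
    and heuristic_admissible: "admissible n adj G c h"
    and generator_valid: "valid_generator n adj gen"
begin

abbreviation nd :: "'v lstate \<Rightarrow> 'v config \<Rightarrow> 'v hnode" where
  "nd s x \<equiv> the (nodes s x)"

lemma heuristic_goal: "h G = 0"
proof -
  have "is_path n adj [G]"
    unfolding is_path_def by simp
  then have "h G \<le> path_cost c [G]"
    using heuristic_admissible unfolding admissible_def by auto
  then show ?thesis
    using heuristic_nonneg[OF length_G] by (simp add: path_cost_def)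
qed

lemma generator_sound:
  assumes "length q = n" and "\<forall>(i, u)\<in>set C. i < n" and "gen q C = Some Q'"
  shows "connected n adj q Q'" and "\<forall>(i, u)\<in>set C. Q' ! i = u"
proof -
  have "\<forall>Q C Q'. length Q = n \<longrightarrow> (\<forall>(i, u)\<in>set C. i < n) \<longrightarrow> gen Q C = Some Q' \<longrightarrow>
      connected n adj Q Q' \<and> (\<forall>(i, u)\<in>set C. Q' ! i = u)"
    using generator_valid unfolding valid_generator_def by (rule conjunct1)
  then have "length q = n \<longrightarrow> (\<forall>(i, u)\<in>set C. i < n) \<longrightarrow> gen q C = Some Q' \<longrightarrow>
      connected n adj q Q' \<and> (\<forall>(i, u)\<in>set C. Q' ! i = u)"
    by (elim allE)
  then show "connected n adj q Q'" and "\<forall>(i, u)\<in>set C. Q' ! i = u"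
    using assms by simp_all
qed

lemma generator_branch:
  assumes ord: "distinct ord" "set ord = {..<n}" and q: "length q = n" and Y: "connected n adj q Y"
  shows "gen q (branch ord Y) = Some Y"
proof -
  let ?C = "branch ord Y"
  have idx: "\<forall>(i, u)\<in>set ?C. i < n" and fits: "\<forall>(i, u)\<in>set ?C. Y ! i = u"
    and total: "\<forall>i<n. \<exists>u. (i, u) \<in> set ?C"
    using ord unfolding branch_def by auto
  have "\<forall>Q C Q'. length Q = n \<longrightarrow> (\<forall>(i, u)\<in>set C. i < n) \<longrightarrow> (\<forall>i<n. \<exists>u. (i, u) \<in> set C) \<longrightarrow>
      connected n adj Q Q' \<longrightarrow> (\<forall>(i, u)\<in>set C. Q' ! i = u) \<longrightarrow> gen Q C \<noteq> None"
    using generator_valid unfolding valid_generator_def by (rule conjunct2)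
  then have "length q = n \<longrightarrow> (\<forall>(i, u)\<in>set ?C. i < n) \<longrightarrow> (\<forall>i<n. \<exists>u. (i, u) \<in> set ?C) \<longrightarrow>
      connected n adj q Y \<longrightarrow> (\<forall>(i, u)\<in>set ?C. Y ! i = u) \<longrightarrow> gen q ?C \<noteq> None"
    by (elim allE)
  then obtain Q' where Q': "gen q ?C = Some Q'"
    using q idx total Y fits by auto
  have "length Q' = n" and "length Y = n"
    using generator_sound(1)[OF q idx Q'] Y unfolding connected_def by simp_all
  moreover have "Q' ! i = Y ! i" if i: "i < n" for i
  proof -
    obtain u where "(i, u) \<in> set ?C"
      using total i by blast
    then show ?thesis
      using generator_sound(2)[OF q idx Q'] fits by auto
  qed
  ultimately have "Q' = Y"
    by (simp add: nth_equalityI)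
  then show ?thesis
    using Q' by simp
qed

text \<open>Every g-value is a sum of positive step costs, so a g-value can decrease only finitely often.\<close>

definition costs :: "real set" where
  "costs = list_sums (case_prod c) {(X, Y). length X = n \<and> length Y = n \<and> 0 < c X Y}"

lemma costs_add:
  assumes "v \<in> costs" and "length X = n" and "length Y = n"
  shows "v + c X Y \<in> costs"
proof (cases "c X Y = 0")
  case False
  then have "0 < c X Y"
    using cost_nonneg[OF assms(2,3)] by simp
  then show ?thesis
    using list_sums_add[of v "case_prod c" _ "(X, Y)"] assms unfolding costs_def by simp
qed (use assms in simp)

lemma costs_nonneg: "v \<in> costs \<Longrightarrow> 0 \<le> v"
  unfolding costs_def by (rule list_sums_nonneg) auto

lemma finite_configs: "finite {xs :: 'v config. length xs = n}"
  using finite_lists_length_eq[of "UNIV :: 'v set" n] by simp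

lemma finite_costs_below: "finite {v \<in> costs. v < B}"
proof -
  have "{(X, Y). length X = n \<and> length Y = n \<and> 0 < c X Y} \<subseteq>
      {xs :: 'v config. length xs = n} \<times> {xs. length xs = n}"
    by auto
  then show ?thesis
    unfolding costs_def using finite_configs
    by (intro finite_list_sums_below) (auto intro: finite_subset)
qed

section \<open>Invariants\<close>

definition parent_rel :: "'v lstate \<Rightarrow> ('v config \<times> 'v config) set" where
  "parent_rel s = {(p, x). x \<in> dom (nodes s) \<and> par (nd s x) = Some p}"

definition parent_tree :: "'v lstate \<Rightarrow> bool" where
  "parent_tree s \<longleftrightarrow>
     (\<forall>x\<in>dom (nodes s). length x = n \<and> gof s x \<in> costs \<and> (par (nd s x) = None \<longleftrightarrow> x = S)) \<and>
     S \<in> dom (nodes s) \<and> gof s S = 0 \<and>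
     (\<forall>p x. (p, x) \<in> parent_rel s \<longrightarrow>
        p \<in> dom (nodes s) \<and> connected n adj p x \<and> gof s p + c p x \<le> gof s x) \<and>
     acyclic (parent_rel s)"

definition node_complete :: "'v config set \<Rightarrow> 'v config \<Rightarrow> 'v hnode \<Rightarrow> bool" where
  "node_complete D x N \<longleftrightarrow>
     distinct (ordr N) \<and> set (ordr N) = {..<n} \<and>
     (\<forall>C\<in>set (tree N). map fst C = take (length C) (ordr N)) \<and>
     (\<forall>y\<in>set (nbrs N). y \<in> D \<and> connected n adj x y) \<and>
     (\<forall>Y. connected n adj x Y \<longrightarrow> Y \<in> set (nbrs N) \<or> (\<exists>C\<in>set (tree N). C = take (length C) (branch (ordr N) Y)))"

definition expansion_complete :: "'v lstate \<Rightarrow> bool" where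
  "expansion_complete s \<longleftrightarrow> (\<forall>x\<in>dom (nodes s). node_complete (dom (nodes s)) x (nd s x))"

definition frontier_ok :: "'v lstate \<Rightarrow> bool" where
  "frontier_ok s \<longleftrightarrow> set (opn s) \<subseteq> dom (nodes s) \<and>
     (goal s = None \<or> goal s = Some G) \<and> (goal s \<noteq> None \<longrightarrow> G \<in> dom (nodes s)) \<and>
     (G \<in> dom (nodes s) \<longrightarrow> G \<notin> set (opn s) \<longrightarrow> goal s \<noteq> None) \<and>
     (\<forall>x\<in>dom (nodes s). x \<notin> set (opn s) \<longrightarrow>
        tree (nd s x) = [] \<or> (goal s \<noteq> None \<and> fof h s G \<le> fof h s x))"

definition queue_ok :: "'v lstate \<Rightarrow> bool" where
  "queue_ok s \<longleftrightarrow> fst ` set (dq s) \<subseteq> dom (nodes s) \<and> (\<not> in_dijk s \<longrightarrow> dq s = [])"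

text \<open>During the Dijkstra step for \<open>x0\<close>, its edges to \<open>T\<close> still await relaxation.\<close>

definition consistent_except :: "'v lstate \<Rightarrow> 'v config \<Rightarrow> 'v config set \<Rightarrow> bool" where
  "consistent_except s x0 T \<longleftrightarrow> (\<forall>x\<in>dom (nodes s). \<forall>y\<in>set (nbrs (nd s x)).
      gof s y \<le> gof s x + c x y \<or> x \<in> fst ` set (dq s) \<or> (x = x0 \<and> y \<in> T))"

definition consistent :: "'v lstate \<Rightarrow> bool" where
  "consistent s \<longleftrightarrow> (\<forall>x\<in>dom (nodes s). \<forall>y\<in>set (nbrs (nd s x)).
      gof s y \<le> gof s x + c x y \<or> x \<in> fst ` set (dq s))"

definition search_inv :: "'v lstate \<Rightarrow> bool" where
  "search_inv s \<longleftrightarrow> parent_tree s \<and> expansion_complete s \<and> frontier_ok s \<and> queue_ok s"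

definition invariant :: "'v lstate \<Rightarrow> bool" where
  "invariant s \<longleftrightarrow> search_inv s \<and> consistent s"

lemma parent_treeI:
  assumes "\<And>x. x \<in> dom (nodes s) \<Longrightarrow> length x = n \<and> gof s x \<in> costs \<and> (par (nd s x) = None \<longleftrightarrow> x = S)"
    and "S \<in> dom (nodes s)" and "gof s S = 0"
    and "\<And>p x. (p, x) \<in> parent_rel s \<Longrightarrow> p \<in> dom (nodes s) \<and> connected n adj p x \<and> gof s p + c p x \<le> gof s x"
    and "acyclic (parent_rel s)"
  shows "parent_tree s"
  unfolding parent_tree_def using assms by (intro conjI ballI allI impI) simp_all

lemma parent_treeD:
  assumes "parent_tree s"
  shows "x \<in> dom (nodes s) \<Longrightarrow> length x = n"
    and "x \<in> dom (nodes s) \<Longrightarrow> gof s x \<in> costs"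
    and "x \<in> dom (nodes s) \<Longrightarrow> par (nd s x) = None \<longleftrightarrow> x = S"
    and "S \<in> dom (nodes s)" and "gof s S = 0"
    and "(p, x) \<in> parent_rel s \<Longrightarrow> p \<in> dom (nodes s) \<and> connected n adj p x \<and> gof s p + c p x \<le> gof s x"
    and "acyclic (parent_rel s)"
  using assms unfolding parent_tree_def by auto

lemma node_completeI:
  assumes "distinct (ordr N)" and "set (ordr N) = {..<n}"
    and "\<And>C. C \<in> set (tree N) \<Longrightarrow> map fst C = take (length C) (ordr N)"
    and "\<And>y. y \<in> set (nbrs N) \<Longrightarrow> y \<in> D \<and> connected n adj x y"
    and "\<And>Y. connected n adj x Y \<Longrightarrow>
      Y \<in> set (nbrs N) \<or> (\<exists>C\<in>set (tree N). C = take (length C) (branch (ordr N) Y))"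
  shows "node_complete D x N"
  using assms unfolding node_complete_def by blast

lemma node_completeD:
  assumes "node_complete D x N"
  shows "distinct (ordr N)" and "set (ordr N) = {..<n}"
    and "C \<in> set (tree N) \<Longrightarrow> map fst C = take (length C) (ordr N)"
    and "y \<in> set (nbrs N) \<Longrightarrow> y \<in> D \<and> connected n adj x y"
    and "connected n adj x Y \<Longrightarrow>
      Y \<in> set (nbrs N) \<or> (\<exists>C\<in>set (tree N). C = take (length C) (branch (ordr N) Y))"
  using assms unfolding node_complete_def by blast+

lemma node_complete_mono: "D \<subseteq> D' \<Longrightarrow> node_complete D x N \<Longrightarrow> node_complete D' x N"
  unfolding node_complete_def by blast

lemma node_complete_fresh:
  "distinct o' \<Longrightarrow> set o' = {..<n} \<Longrightarrow>
    node_complete D x \<lparr>tree = [[]], par = p, nbrs = [], gval = g, ordr = o'\<rparr>"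
  unfolding node_complete_def by simp

lemma expansion_completeD:
  assumes "expansion_complete s" and "x \<in> dom (nodes s)"
  shows "distinct (ordr (nd s x))" and "set (ordr (nd s x)) = {..<n}"
    and "C \<in> set (tree (nd s x)) \<Longrightarrow> map fst C = take (length C) (ordr (nd s x))"
    and "y \<in> set (nbrs (nd s x)) \<Longrightarrow> y \<in> dom (nodes s) \<and> connected n adj x y"
    and "connected n adj x Y \<Longrightarrow> Y \<in> set (nbrs (nd s x)) \<or>
        (\<exists>C\<in>set (tree (nd s x)). C = take (length C) (branch (ordr (nd s x)) Y))"
  using assms unfolding expansion_complete_def node_complete_def by auto

lemma frontier_okI:
  assumes "set (opn s) \<subseteq> dom (nodes s)"
    and "goal s = None \<or> goal s = Some G" and "goal s \<noteq> None \<Longrightarrow> G \<in> dom (nodes s)"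
    and "G \<in> dom (nodes s) \<Longrightarrow> G \<notin> set (opn s) \<Longrightarrow> goal s \<noteq> None"
    and "\<And>x. x \<in> dom (nodes s) \<Longrightarrow> x \<notin> set (opn s) \<Longrightarrow>
      tree (nd s x) = [] \<or> (goal s \<noteq> None \<and> fof h s G \<le> fof h s x)"
  shows "frontier_ok s"
  unfolding frontier_ok_def using assms by (intro conjI ballI impI) simp_all

lemma frontier_okD:
  assumes "frontier_ok s"
  shows "set (opn s) \<subseteq> dom (nodes s)"
    and "goal s = None \<or> goal s = Some G" and "goal s \<noteq> None \<Longrightarrow> G \<in> dom (nodes s)"
    and "G \<in> dom (nodes s) \<Longrightarrow> G \<notin> set (opn s) \<Longrightarrow> goal s \<noteq> None"
    and "x \<in> dom (nodes s) \<Longrightarrow> x \<notin> set (opn s) \<Longrightarrow>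
      tree (nd s x) = [] \<or> (goal s \<noteq> None \<and> fof h s G \<le> fof h s x)"
  using assms unfolding frontier_ok_def by auto

lemma consistent_except_empty: "consistent_except s x0 {} \<longleftrightarrow> consistent s"
  unfolding consistent_except_def consistent_def by simp

lemma invariantD:
  assumes "invariant s"
  shows "parent_tree s" and "expansion_complete s" and "frontier_ok s" and "queue_ok s" and "consistent s"
  using assms unfolding invariant_def search_inv_def by simp_all

lemma consistentD:
  "consistent s \<Longrightarrow> x \<in> dom (nodes s) \<Longrightarrow> y \<in> set (nbrs (nd s x)) \<Longrightarrow>
    gof s y \<le> gof s x + c x y \<or> x \<in> fst ` set (dq s)"
  unfolding consistent_def by blast

lemma gof_cong: "(\<And>x. gval (nd s' x) = gval (nd s x)) \<Longrightarrow> gof s' = gof s"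
  unfolding gof_def by auto

lemma parent_tree_cong:
  assumes "dom (nodes s') = dom (nodes s)"
    and "\<And>x. par (nd s' x) = par (nd s x)" and "\<And>x. gval (nd s' x) = gval (nd s x)"
  shows "parent_tree s' \<longleftrightarrow> parent_tree s"
proof -
  have "gof s' = gof s"
    using assms(3) by (rule gof_cong)
  moreover have "parent_rel s' = parent_rel s"
    using assms(1,2) unfolding parent_rel_def by simp
  ultimately show ?thesis
    using assms unfolding parent_tree_def by simp
qed

lemma expansion_complete_cong:
  assumes "dom (nodes s') = dom (nodes s)" and "\<And>x. ordr (nd s' x) = ordr (nd s x)"
    and "\<And>x. tree (nd s' x) = tree (nd s x)" and "\<And>x. nbrs (nd s' x) = nbrs (nd s x)"
  shows "expansion_complete s' \<longleftrightarrow> expansion_complete s"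
  using assms unfolding expansion_complete_def node_complete_def by simp

lemma finite_explored:
  assumes "parent_tree s"
  shows "finite (dom (nodes s))"
proof -
  have "dom (nodes s) \<subseteq> {xs. length xs = n}"
    using parent_treeD(1)[OF assms] by blast
  then show ?thesis
    using finite_configs finite_subset by blast
qed

lemma parent_rel_gof_mono:
  assumes "parent_tree s" and "(a, b) \<in> (parent_rel s)\<^sup>*"
  shows "gof s a \<le> gof s b"
  using assms(2)
proof (induction rule: rtrancl_induct)
  case (step y z)
  then have "y \<in> dom (nodes s)" and "gof s y + c y z \<le> gof s z"
    using parent_treeD(6)[OF assms(1), of y z] by simp_all
  moreover have "z \<in> dom (nodes s)"
    using step.hyps(2) unfolding parent_rel_def by simp
  ultimately have "gof s y \<le> gof s z"
    using cost_nonneg[of y z] parent_treeD(1)[OF assms(1)] by force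
  then show ?case
    using step.IH by linarith
qed simp

lemma goal_update:
  assumes "frontier_ok s"
  shows "(if q = G then Some q else goal s) = (if q = G \<or> goal s \<noteq> None then Some G else None)"
  using frontier_okD(2)[OF assms] by auto

lemma invariant_init:
  assumes "distinct o0" and "set o0 = {..<n}"
  shows "invariant (init_state S o0)"
proof -
  let ?s = "init_state S o0"
  have dom: "dom (nodes ?s) = {S}" and node: "nd ?s S = \<lparr>tree = [[]], par = None, nbrs = [], gval = 0, ordr = o0\<rparr>"
    unfolding init_state_def by simp_all
  have "parent_rel ?s = {}"
    unfolding parent_rel_def dom using node by auto
  then have "parent_tree ?s"
    unfolding parent_tree_def dom using node length_S
    by (simp add: gof_def costs_def zero_in_list_sums acyclic_def)
  moreover have "expansion_complete ?s"
    unfolding expansion_complete_def node_complete_def dom using node assms by simp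
  moreover have "frontier_ok ?s" and "queue_ok ?s" and "consistent ?s"
    unfolding frontier_ok_def queue_ok_def consistent_def dom using node
    by (simp_all add: init_state_def)
  ultimately show ?thesis
    unfolding invariant_def search_inv_def by blast
qed

lemma generator_connected:
  assumes I: "parent_tree s" "expansion_complete s" and q: "q \<in> dom (nodes s)"
    and C: "C \<in> set (tree (nd s q))" and gQ: "gen q C = Some Q'"
  shows "connected n adj q Q'"
proof -
  have "fst ` set C \<subseteq> set (ordr (nd s q))"
    using expansion_completeD(3)[OF I(2) q C] by (metis list.set_map set_take_subset)
  then have "\<forall>(i, u)\<in>set C. i < n"
    using expansion_completeD(2)[OF I(2) q] by fastforce
  then show ?thesis
    using generator_sound(1)[OF parent_treeD(1)[OF I(1) q] _ gQ] by simp
qed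

lemma expand_branch_head:
  assumes ord: "distinct ord" "set ord = {..<n}" and q: "length q = n"
    and C: "C = take (length C) (branch ord Y)" and us: "expand_tree n adj q ord C us"
    and Y: "connected n adj q Y"
  shows "gen q C = Some Y \<or> (\<exists>C'\<in>set (new_children n ord C us). C' = take (length C') (branch ord Y))"
proof -
  have len_ord: "length ord = n"
    using distinct_card[OF ord(1)] ord(2) by simp
  show ?thesis
  proof (cases "length C < n")
    case True
    let ?C' = "take (Suc (length C)) (branch ord Y)"
    have "?C' \<in> set (new_children n ord C us)"
      using new_children_branch[OF C ord(2) len_ord True us Y] .
    moreover have "length ?C' = Suc (length C)"
      using True len_ord by (simp add: branch_def)
    ultimately show ?thesis
      by (intro disjI2 bexI[of _ ?C']) simp_all
  next
    case False
    then have "length (branch ord Y) \<le> length C"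
      using len_ord by (simp add: branch_def)
    then have "C = branch ord Y"
      using C take_all by metis
    then show ?thesis
      using generator_branch[OF ord q Y] by simp
  qed
qed

lemma node_complete_expand:
  assumes N: "node_complete D q N" and tr: "tree N = C # Cs"
    and us: "expand_tree n adj q (ordr N) C us" and q: "length q = n"
    and E: "\<And>y. y \<in> set E \<Longrightarrow> y \<in> D \<and> connected n adj q y"
    and gen_E: "\<And>Y. gen q C = Some Y \<Longrightarrow> Y \<in> set E"
  shows "node_complete D q (N\<lparr>tree := Cs @ new_children n (ordr N) C us, nbrs := nbrs N @ E\<rparr>)"
proof -
  let ?ord = "ordr N" and ?T = "Cs @ new_children n (ordr N) C us"
  define N' where "N' = N\<lparr>tree := ?T, nbrs := nbrs N @ E\<rparr>"
  have sel: "ordr N' = ?ord" "tree N' = ?T" "nbrs N' = nbrs N @ E"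
    unfolding N'_def by simp_all
  note ord = node_completeD(1,2)[OF N]
  have idx: "map fst C' = take (length C') ?ord" if "C' \<in> set ?T" for C'
  proof (cases "C' \<in> set Cs")
    case False
    have "map fst C = take (length C) ?ord"
      using node_completeD(3)[OF N] tr by simp
    moreover have "C' \<in> set (new_children n ?ord C us)"
      using that False by simp
    moreover have "length ?ord = n"
      using distinct_card[OF ord(1)] ord(2) by simp
    ultimately show ?thesis
      by (rule new_children_indices)
  qed (use node_completeD(3)[OF N] tr in simp)
  have nbrs: "y \<in> D \<and> connected n adj q y" if y: "y \<in> set (nbrs N @ E)" for y
  proof (cases "y \<in> set E")
    case False
    then show ?thesis
      using y node_completeD(4)[OF N] by simp
  qed (rule E)
  have cover: "Y \<in> set (nbrs N @ E) \<or> (\<exists>C'\<in>set ?T. C' = take (length C') (branch ?ord Y))"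
    if Y: "connected n adj q Y" for Y
  proof -
    have "Y \<in> set (nbrs N) \<or> (\<exists>C'\<in>set (C # Cs). C' = take (length C') (branch ?ord Y))"
      using node_completeD(5)[OF N Y] tr by simp
    then show ?thesis
    proof (elim disjE bexE)
      fix C' assume C': "C' \<in> set (C # Cs)" "C' = take (length C') (branch ?ord Y)"
      show ?thesis
      proof (cases "C' \<in> set Cs")
        case True
        then show ?thesis
          using C'(2) by (intro disjI2 bexI[of _ C']) simp_all
      next
        case False
        then show ?thesis
          using C' expand_branch_head[OF ord q _ us Y] gen_E by auto
      qed
    qed simp
  qed
  have "node_complete D q N'"
    by (rule node_completeI) (unfold sel; fact ord idx nbrs cover)+
  then show ?thesis
    unfolding N'_def .
qed

section \<open>Termination measure\<close>

text \<open>Exploring a new configuration adds a fresh constraint tree of weight \<open>(|V| + 1) ^ n\<close>,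
  which the first summand pays for.\<close>

definition expansion_measure :: "'v lstate \<Rightarrow> nat" where
  "expansion_measure s =
     ((card (UNIV :: 'v set) + 1) ^ n + 1) * card ({xs. length xs = n} - dom (nodes s)) +
     (\<Sum>x\<in>dom (nodes s). queue_weight n (tree (nd s x)))"

definition cost_measure :: "'v lstate \<Rightarrow> nat" where
  "cost_measure s = (\<Sum>x\<in>dom (nodes s). card {v \<in> costs. v < gof s x})"

definition dijkstra_measure :: "'v lstate \<Rightarrow> nat" where
  "dijkstra_measure s = (if in_dijk s then Suc (length (dq s)) else 0)"

definition termination_rel :: "('v lstate \<times> 'v lstate) set" where
  "termination_rel = measures [expansion_measure, cost_measure, dijkstra_measure, \<lambda>s. length (opn s)]"

section \<open>Preservation of the invariants\<close>

lemma same_nodes: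
  assumes "nodes s' = nodes s"
  shows "gof s' = gof s" and "fof h s' = fof h s"
    and "parent_tree s' \<longleftrightarrow> parent_tree s" and "expansion_complete s' \<longleftrightarrow> expansion_complete s"
    and "expansion_measure s' = expansion_measure s" and "cost_measure s' = cost_measure s"
proof -
  show gof: "gof s' = gof s"
    unfolding gof_def assms ..
  then show "fof h s' = fof h s"
    unfolding fof_def by simp
  show "parent_tree s' \<longleftrightarrow> parent_tree s"
    using assms by (intro parent_tree_cong) simp_all
  show "expansion_complete s' \<longleftrightarrow> expansion_complete s"
    using assms by (intro expansion_complete_cong) simp_all
  show "expansion_measure s' = expansion_measure s" and "cost_measure s' = cost_measure s"
    unfolding expansion_measure_def cost_measure_def gof assms by simp_all
qed

lemma pop_preserves:
  assumes inv: "invariant s" and o: "opn s = q # rest"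
    and gl: "gl = (if q = G then Some q else goal s)"
    and closed: "tree (nd s q) = [] \<or> (\<exists>qg. gl = Some qg \<and> fof h s qg \<le> fof h s q)"
  shows "invariant (s\<lparr>opn := rest, goal := gl\<rparr>)"
proof -
  let ?s = "s\<lparr>opn := rest, goal := gl\<rparr>"
  note I = invariantD[OF inv]
  have same: "nodes ?s = nodes s"
    by simp
  note fr = frontier_okD[OF I(3)]
  have q: "q \<in> dom (nodes s)"
    using fr(1) o by simp
  have gl': "gl = (if q = G \<or> goal s \<noteq> None then Some G else None)"
    using goal_update[OF I(3)] gl by simp
  have "frontier_ok ?s"
  proof (rule frontier_okI)
    show "set (opn ?s) \<subseteq> dom (nodes ?s)"
      using fr(1) o by simp
    show "goal ?s = None \<or> goal ?s = Some G"
      using gl' by simp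
    show "G \<in> dom (nodes ?s)" if "goal ?s \<noteq> None"
      using that gl' q fr(3) by (cases "q = G"; cases "goal s") simp_all
    show "goal ?s \<noteq> None" if "G \<in> dom (nodes ?s)" and "G \<notin> set (opn ?s)"
      using that o gl' fr(4) by (cases "q = G") simp_all
    show "tree (nd ?s x) = [] \<or> (goal ?s \<noteq> None \<and> fof h ?s G \<le> fof h ?s x)"
      if x: "x \<in> dom (nodes ?s)" "x \<notin> set (opn ?s)" for x
    proof (cases "x = q")
      case True
      then show ?thesis
        using closed gl' same_nodes(2)[OF same] by (cases "q = G \<or> goal s \<noteq> None") auto
    next
      case False
      then have "tree (nd s x) = [] \<or> (goal s \<noteq> None \<and> fof h s G \<le> fof h s x)"
        using x o fr(5) by simp
      then show ?thesis
        using gl' same_nodes(2)[OF same] by auto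
    qed
  qed
  moreover have "queue_ok ?s" and "consistent ?s"
    using I(4,5) same_nodes(1)[OF same] unfolding queue_ok_def consistent_def by simp_all
  ultimately show ?thesis
    using I(1,2) same_nodes(3,4)[OF same] unfolding invariant_def search_inv_def by simp
qed

lemma expansion_complete_update:
  assumes ec: "expansion_complete s" and nodes': "nodes s' = (nodes s)(q \<mapsto> N)"
    and N: "node_complete (insert q (dom (nodes s))) q N"
  shows "expansion_complete s'"
  unfolding expansion_complete_def
proof
  fix x assume x: "x \<in> dom (nodes s')"
  show "node_complete (dom (nodes s')) x (nd s' x)"
  proof (cases "x = q")
    case False
    then have "node_complete (dom (nodes s)) x (nd s x)"
      using ec x nodes' unfolding expansion_complete_def by simp
    then show ?thesis
      using False nodes' by (simp add: node_complete_mono[of "dom (nodes s)"] subset_insertI)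
  qed (use N nodes' in simp)
qed

lemma expansion_measure_expand:
  assumes fin: "finite (dom (nodes s))" and q: "q \<in> dom (nodes s)"
    and tr: "tree (nd s q) = C # Cs" and us: "expand_tree n adj q (ordr (nd s q)) C us"
    and nodes': "nodes s' = (nodes s)(q \<mapsto> N)" and tree': "tree N = Cs @ new_children n (ordr (nd s q)) C us"
  shows "expansion_measure s' < expansion_measure s"
proof -
  let ?w = "\<lambda>s x. queue_weight n (tree (nd s x))"
  have dom': "dom (nodes s') = dom (nodes s)"
    using nodes' q by auto
  have less: "?w s' q < ?w s q"
    using nodes' tree' tr queue_weight_new_children_less[OF us] by (simp add: queue_weight_def)
  have rest: "(\<Sum>x\<in>dom (nodes s) - {q}. ?w s' x) = (\<Sum>x\<in>dom (nodes s) - {q}. ?w s x)"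
    using nodes' by (intro sum.cong) auto
  have "(\<Sum>x\<in>dom (nodes s). ?w s' x) < (\<Sum>x\<in>dom (nodes s). ?w s x)"
    using sum.remove[OF fin q, of "?w s'"] sum.remove[OF fin q, of "?w s"] less rest by simp
  then show ?thesis
    unfolding expansion_measure_def dom' by simp
qed

lemma expand_preserves:
  assumes si: "search_inv s" and q: "q \<in> set (opn s)" and tr: "tree (nd s q) = C # Cs"
    and us: "expand_tree n adj q (ordr (nd s q)) C us"
    and E: "\<And>y. y \<in> set E \<Longrightarrow> y \<in> dom (nodes s) \<and> connected n adj q y"
    and gen_E: "\<And>Y. gen q C = Some Y \<Longrightarrow> Y \<in> set E"
    and nodes': "nodes s' = (nodes s)(q \<mapsto> (nd s q)\<lparr>tree := Cs @ new_children n (ordr (nd s q)) C us,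
                                                    nbrs := nbrs (nd s q) @ E\<rparr>)"
    and opn': "opn s' = opn s" and goal': "goal s' = (if q = G then Some q else goal s)"
  shows "parent_tree s' \<and> expansion_complete s' \<and> frontier_ok s' \<and> expansion_measure s' < expansion_measure s"
proof -
  have I: "parent_tree s" "expansion_complete s" "frontier_ok s"
    using si unfolding search_inv_def by simp_all
  note fr = frontier_okD[OF I(3)]
  have q_dom: "q \<in> dom (nodes s)"
    using fr(1) q by blast
  have dom': "dom (nodes s') = dom (nodes s)"
    using nodes' q_dom by auto
  have node': "nd s' x = (if x = q then (nd s q)\<lparr>tree := Cs @ new_children n (ordr (nd s q)) C us,
      nbrs := nbrs (nd s q) @ E\<rparr> else nd s x)" for x
    using nodes' by simp
  have gof': "gof s' = gof s" and fof': "fof h s' = fof h s"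
    using gof_cong[of s' s] node' unfolding fof_def by simp_all
  have "parent_tree s'"
    using I(1) dom' node' by (subst parent_tree_cong) simp_all
  moreover have "expansion_complete s'"
  proof (rule expansion_complete_update[OF I(2) nodes'])
    have "node_complete (dom (nodes s)) q (nd s q)"
      using I(2) q_dom unfolding expansion_complete_def by simp
    then show "node_complete (insert q (dom (nodes s))) q
        ((nd s q)\<lparr>tree := Cs @ new_children n (ordr (nd s q)) C us, nbrs := nbrs (nd s q) @ E\<rparr>)"
      using node_complete_expand tr us E gen_E parent_treeD(1)[OF I(1) q_dom] q_dom
      by (simp add: insert_absorb)
  qed
  moreover have "frontier_ok s'"
  proof (rule frontier_okI)
    have gl: "goal s' = (if q = G \<or> goal s \<noteq> None then Some G else None)"
      using goal_update[OF I(3)] goal' by simp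
    show "set (opn s') \<subseteq> dom (nodes s')"
      using fr(1) opn' dom' by simp
    show "goal s' = None \<or> goal s' = Some G"
      using gl by simp
    show "G \<in> dom (nodes s')" if "goal s' \<noteq> None"
      using that gl q_dom fr(3) dom' by (cases "q = G"; cases "goal s") simp_all
    show "goal s' \<noteq> None" if "G \<in> dom (nodes s')" and "G \<notin> set (opn s')"
      using that gl fr(4) dom' opn' by simp
    show "tree (nd s' x) = [] \<or> (goal s' \<noteq> None \<and> fof h s' G \<le> fof h s' x)"
      if "x \<in> dom (nodes s')" and "x \<notin> set (opn s')" for x
      using that q fr(5)[of x] gl node' fof' dom' opn' by (cases "x = q") auto
  qed
  moreover have "expansion_measure s' < expansion_measure s"
    using expansion_measure_expand[OF finite_explored[OF I(1)] q_dom tr us nodes'] by simp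
  ultimately show ?thesis
    by blast
qed

lemma consistent_expand:
  assumes cons: "consistent s" and q: "q \<in> dom (nodes s)"
    and nodes': "nodes s' = (nodes s)(q \<mapsto> (nd s q)\<lparr>tree := T, nbrs := nbrs (nd s q) @ E\<rparr>)"
    and dq: "fst ` set (dq s) \<subseteq> fst ` set (dq s')"
    and E: "\<And>y. y \<in> set E \<Longrightarrow> gof s y \<le> gof s q + c q y \<or> q \<in> fst ` set (dq s')"
  shows "consistent s'"
  unfolding consistent_def
proof (intro ballI)
  fix x y assume x: "x \<in> dom (nodes s')" and y: "y \<in> set (nbrs (nd s' x))"
  have gof': "gof s' = gof s"
    using nodes' by (intro gof_cong) simp
  have old: "gof s y \<le> gof s x + c x y \<or> x \<in> fst ` set (dq s')"
    if "x \<in> dom (nodes s)" and "y \<in> set (nbrs (nd s x))"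
    using cons that dq unfolding consistent_def by blast
  show "gof s' y \<le> gof s' x + c x y \<or> x \<in> fst ` set (dq s')"
  proof (cases "x = q")
    case True
    have "y \<in> set (nbrs (nd s x)) \<or> y \<in> set E"
      using y nodes' True by simp
    then show ?thesis
    proof
      assume "y \<in> set (nbrs (nd s x))"
      then show ?thesis
        using old q True gof' by simp
    next
      assume "y \<in> set E"
      then show ?thesis
        using E True gof' by simp
    qed
  next
    case False
    then show ?thesis
      using old x y nodes' gof' by simp
  qed
qed

lemma parent_tree_update:
  assumes pt: "parent_tree s" and p: "p \<in> dom (nodes s)" and con: "connected n adj p t" and tS: "t \<noteq> S"
    and nodes': "nodes s' = (nodes s)(t \<mapsto> N)" and par: "par N = Some p" and g: "gval N = gof s p + c p t"
    and not_higher: "t \<in> dom (nodes s) \<Longrightarrow> gval N \<le> gof s t"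
    and no_cycle: "(t, p) \<notin> (parent_rel s)\<^sup>*"
  shows "parent_tree s'"
proof -
  note P = parent_treeD[OF pt]
  have len: "length p = n" "length t = n"
    using con unfolding connected_def by simp_all
  have tp: "t \<noteq> p"
    using no_cycle by auto
  have dom': "dom (nodes s') = insert t (dom (nodes s))"
    using nodes' by simp
  have gof': "gof s' x = (if x = t then gval N else gof s x)" for x
    using nodes' unfolding gof_def by simp
  have par': "par (nd s' x) = (if x = t then Some p else par (nd s x))" for x
    using nodes' par by simp
  have rel': "parent_rel s' \<subseteq> insert (p, t) (parent_rel s)"
    using dom' par' unfolding parent_rel_def by auto
  have acyc: "acyclic (parent_rel s')"
    using acyclic_subset[OF _ rel'] P(7) no_cycle by simp
  show ?thesis
  proof (rule parent_treeI)
    show "length x = n \<and> gof s' x \<in> costs \<and> (par (nd s' x) = None \<longleftrightarrow> x = S)"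
      if "x \<in> dom (nodes s')" for x
    proof (cases "x = t")
      case True
      then show ?thesis
        using len tS gof' par' g costs_add[OF P(2)[OF p] len] by simp
    next
      case False
      then show ?thesis
        using that dom' gof' par' P(1-3) by simp
    qed
    show "S \<in> dom (nodes s')" and "gof s' S = 0"
      using dom' gof' P(4,5) tS by simp_all
    show "p' \<in> dom (nodes s') \<and> connected n adj p' x \<and> gof s' p' + c p' x \<le> gof s' x"
      if px': "(p', x) \<in> parent_rel s'" for p' x
    proof (cases "x = t")
      case True
      then have "p' = p"
        using px' par' unfolding parent_rel_def by simp
      then show ?thesis
        using True p con dom' gof' g tp by simp
    next
      case False
      then have px: "(p', x) \<in> parent_rel s"
        using px' dom' par' unfolding parent_rel_def by simp
      then have "gof s' p' \<le> gof s p'"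
        using gof' not_higher P(6)[OF px] by (cases "p' = t") simp_all
      then show ?thesis
        using P(6)[OF px] dom' gof' False by simp
    qed
  qed (fact acyc)
qed

lemma parent_tree_insert:
  assumes pt: "parent_tree s" and q: "q \<in> dom (nodes s)" and fresh: "Q' \<notin> dom (nodes s)"
    and con: "connected n adj q Q'"
    and nodes': "nodes s' = (nodes s)(Q' \<mapsto> \<lparr>tree = T, par = Some q, nbrs = B, gval = gof s q + c q Q', ordr = o'\<rparr>)"
  shows "parent_tree s'"
proof (rule parent_tree_update[OF pt q con _ nodes'])
  show "Q' \<noteq> S"
    using fresh parent_treeD(4)[OF pt] by auto
  have "(Q', z) \<notin> parent_rel s" for z
    using parent_treeD(6)[OF pt, of Q' z] fresh by blast
  moreover have "Q' \<noteq> q"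
    using fresh q by auto
  ultimately show "(Q', q) \<notin> (parent_rel s)\<^sup>*"
    by (auto elim: converse_rtranclE)
qed (use fresh in simp_all)

lemma expansion_measure_insert:
  assumes fin: "finite (dom (nodes s))" and fresh: "Q' \<notin> dom (nodes s)" and len: "length Q' = n"
    and nodes': "nodes s' = (nodes s)(Q' \<mapsto> N)" and tree: "tree N = [[]]"
  shows "expansion_measure s' < expansion_measure s"
proof -
  let ?U = "{xs :: 'v config. length xs = n}" and ?K = "(card (UNIV :: 'v set) + 1) ^ n"
  let ?w = "\<lambda>s x. queue_weight n (tree (nd s x))"
  have dom': "dom (nodes s') = insert Q' (dom (nodes s))"
    using nodes' by simp
  have "card (?U - dom (nodes s)) = Suc (card (?U - dom (nodes s')))"
  proof -
    have "?U - dom (nodes s') = (?U - dom (nodes s)) - {Q'}"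
      using dom' by auto
    then show ?thesis
      using card_Suc_Diff1[of "?U - dom (nodes s)" Q'] finite_configs fresh len by simp
  qed
  moreover have "(\<Sum>x\<in>dom (nodes s'). ?w s' x) = ?K + (\<Sum>x\<in>dom (nodes s). ?w s x)"
  proof -
    have "(\<Sum>x\<in>dom (nodes s). ?w s' x) = (\<Sum>x\<in>dom (nodes s). ?w s x)"
      using nodes' fresh by (intro sum.cong) auto
    moreover have "?w s' Q' = ?K"
      using nodes' tree by (simp add: queue_weight_def constr_weight_def)
    ultimately show ?thesis
      using dom' sum.insert[OF fin fresh, of "?w s'"] by simp
  qed
  ultimately show ?thesis
    unfolding expansion_measure_def by simp
qed

lemma frontier_ok_insert:
  assumes fo: "frontier_ok s" and fresh: "Q' \<notin> dom (nodes s)"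
    and nodes': "nodes s' = (nodes s)(Q' \<mapsto> N)" and opn': "opn s' = Q' # opn s" and goal': "goal s' = goal s"
  shows "frontier_ok s'"
proof (rule frontier_okI)
  note fo = frontier_okD[OF fo]
  have gof': "gof s' x = gof s x" if "x \<noteq> Q'" for x
    using that nodes' unfolding gof_def by simp
  show "set (opn s') \<subseteq> dom (nodes s')"
    using fo(1) nodes' opn' by auto
  show "goal s' = None \<or> goal s' = Some G" and "goal s' \<noteq> None \<Longrightarrow> G \<in> dom (nodes s')"
    using fo(2,3) nodes' goal' by auto
  show "goal s' \<noteq> None" if "G \<in> dom (nodes s')" and "G \<notin> set (opn s')"
    using that fo(4) nodes' opn' goal' by simp
  show "tree (nd s' x) = [] \<or> (goal s' \<noteq> None \<and> fof h s' G \<le> fof h s' x)"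
    if x: "x \<in> dom (nodes s')" "x \<notin> set (opn s')" for x
  proof -
    have "x \<noteq> Q'" and "x \<in> dom (nodes s)" and "x \<notin> set (opn s)"
      using x nodes' opn' by auto
    moreover have "G \<noteq> Q'" if "goal s \<noteq> None"
      using fo(3)[OF that] fresh by blast
    ultimately show ?thesis
      using fo(5)[of x] nodes' gof' goal' unfolding fof_def by auto
  qed
qed

lemma consistent_insert:
  assumes cons: "consistent s" and ec: "expansion_complete s" and fresh: "Q' \<notin> dom (nodes s)"
    and nodes': "nodes s' = (nodes s)(Q' \<mapsto> N)" and N: "nbrs N = []" and dq': "dq s' = dq s"
  shows "consistent s'"
  unfolding consistent_def
proof (intro ballI)
  fix x y assume x: "x \<in> dom (nodes s')" and y: "y \<in> set (nbrs (nd s' x))"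
  then have "x \<noteq> Q'" and x_dom: "x \<in> dom (nodes s)" and y_nbr: "y \<in> set (nbrs (nd s x))"
    using nodes' N by (auto split: if_splits)
  moreover have "y \<noteq> Q'"
    using expansion_completeD(4)[OF ec x_dom y_nbr] fresh by blast
  moreover have "gof s y \<le> gof s x + c x y \<or> x \<in> fst ` set (dq s)"
    using consistentD[OF cons x_dom y_nbr] .
  ultimately show "gof s' y \<le> gof s' x + c x y \<or> x \<in> fst ` set (dq s')"
    using nodes' dq' unfolding gof_def by simp
qed

lemma insert_child_preserves:
  assumes inv: "invariant s" and q: "q \<in> dom (nodes s)" and fresh: "Q' \<notin> dom (nodes s)"
    and con: "connected n adj q Q'" and o': "distinct o'" "set o' = {..<n}"
    and s1: "s1 = s\<lparr>nodes := (nodes s)(Q' \<mapsto> \<lparr>tree = [[]], par = Some q, nbrs = [],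
                                              gval = gval (nd s q) + c q Q', ordr = o'\<rparr>),
                    opn := Q' # opn s\<rparr>"
  shows "invariant s1 \<and> expansion_measure s1 < expansion_measure s"
proof -
  note I = invariantD[OF inv]
  have len: "length Q' = n"
    using con unfolding connected_def by simp
  have "parent_tree s1"
    using parent_tree_insert[OF I(1) q fresh con] s1 by (simp add: gof_def)
  moreover have "expansion_complete s1"
    using expansion_complete_update[OF I(2)] node_complete_fresh[OF o'] s1 by simp
  moreover have "frontier_ok s1"
    using frontier_ok_insert[OF I(3) fresh] s1 by simp
  moreover have "queue_ok s1"
    using I(4) s1 unfolding queue_ok_def by auto
  moreover have "consistent s1"
    using consistent_insert[OF I(5,2) fresh] s1 by simp
  moreover have "expansion_measure s1 < expansion_measure s"
    using expansion_measure_insert[OF finite_explored[OF I(1)] fresh len] s1 by simp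
  ultimately show ?thesis
    unfolding invariant_def search_inv_def by blast
qed

lemma gen_none_preserves:
  assumes inv: "invariant s" and o: "opn s = q # rest"
    and tr: "tree (nd s q) = C # Cs" and us: "expand_tree n adj q (ordr (nd s q)) C us"
    and none: "gen q C = None"
    and s': "s' = s\<lparr>goal := (if q = G then Some q else goal s),
                    nodes := (nodes s)(q \<mapsto> (nd s q)\<lparr>tree := Cs @ new_children n (ordr (nd s q)) C us\<rparr>)\<rparr>"
  shows "invariant s' \<and> expansion_measure s' < expansion_measure s"
proof -
  note I = invariantD[OF inv]
  have q: "q \<in> dom (nodes s)"
    using frontier_okD(1)[OF I(3)] o by simp
  have nodes': "nodes s' = (nodes s)(q \<mapsto> (nd s q)\<lparr>tree := Cs @ new_children n (ordr (nd s q)) C us,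
      nbrs := nbrs (nd s q) @ []\<rparr>)"
    using s' by simp
  have "parent_tree s' \<and> expansion_complete s' \<and> frontier_ok s' \<and> expansion_measure s' < expansion_measure s"
    using inv o tr us none nodes' s' unfolding invariant_def
    by (intro expand_preserves[where E = "[]"]) simp_all
  moreover have "queue_ok s'"
    using I(4) q s' unfolding queue_ok_def by auto
  moreover have "consistent s'"
    using consistent_expand[OF I(5) q nodes'] s' by simp
  ultimately show ?thesis
    unfolding invariant_def search_inv_def by blast
qed

lemma gen_explored_preserves:
  assumes inv: "invariant s" and not_dijk: "\<not> in_dijk s" and o: "opn s = q # rest"
    and tr: "tree (nd s q) = C # Cs" and us: "expand_tree n adj q (ordr (nd s q)) C us"
    and gQ: "gen q C = Some Q'" and old: "Q' \<in> dom (nodes s)"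
    and s': "s' = s\<lparr>goal := (if q = G then Some q else goal s),
                    nodes := (nodes s)(q \<mapsto> (nd s q)\<lparr>tree := Cs @ new_children n (ordr (nd s q)) C us,
                                                 nbrs := nbrs (nd s q) @ [Q']\<rparr>),
                    in_dijk := True, dq := [(q, gval (nd s q))]\<rparr>"
  shows "invariant s' \<and> expansion_measure s' < expansion_measure s"
proof -
  note I = invariantD[OF inv]
  have q: "q \<in> dom (nodes s)"
    using frontier_okD(1)[OF I(3)] o by simp
  have con: "connected n adj q Q'"
    using generator_connected[OF I(1,2) q _ gQ] tr by simp
  have "parent_tree s' \<and> expansion_complete s' \<and> frontier_ok s' \<and> expansion_measure s' < expansion_measure s"
    using inv o tr us gQ old con s' unfolding invariant_def
    by (intro expand_preserves[where E = "[Q']"]) simp_all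
  moreover have "queue_ok s'"
    using q s' unfolding queue_ok_def by simp
  moreover have "consistent s'"
    using consistent_expand[OF I(5) q, of s'] s' I(4) not_dijk unfolding queue_ok_def by simp
  ultimately show ?thesis
    unfolding invariant_def search_inv_def by blast
qed

lemma gen_new_preserves:
  assumes inv: "invariant s" and o: "opn s = q # rest"
    and tr: "tree (nd s q) = C # Cs" and us: "expand_tree n adj q (ordr (nd s q)) C us"
    and gQ: "gen q C = Some Q'" and fresh: "nodes s Q' = None"
    and o': "distinct o'" "set o' = {..<n}"
    and s': "s' = s\<lparr>goal := (if q = G then Some q else goal s),
                    nodes := ((nodes s)(q \<mapsto> (nd s q)\<lparr>tree := Cs @ new_children n (ordr (nd s q)) C us,
                                                  nbrs := nbrs (nd s q) @ [Q']\<rparr>))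
                             (Q' \<mapsto> \<lparr>tree = [[]], par = Some q, nbrs = [],
                                     gval = gval (nd s q) + c q Q', ordr = o'\<rparr>),
                    opn := Q' # opn s\<rparr>"
  shows "invariant s' \<and> expansion_measure s' < expansion_measure s"
proof -
  note I = invariantD[OF inv]
  have q: "q \<in> dom (nodes s)"
    using frontier_okD(1)[OF I(3)] o by simp
  have con: "connected n adj q Q'"
    using generator_connected[OF I(1,2) q _ gQ] tr by simp
  have Qq: "Q' \<noteq> q"
    using q fresh by auto
  define s1 where "s1 = s\<lparr>nodes := (nodes s)(Q' \<mapsto> \<lparr>tree = [[]], par = Some q, nbrs = [],
      gval = gval (nd s q) + c q Q', ordr = o'\<rparr>), opn := Q' # opn s\<rparr>"
  have inv1: "invariant s1" and less1: "expansion_measure s1 < expansion_measure s"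
    using insert_child_preserves[OF inv q _ con o' s1_def] fresh by auto
  have node1: "nd s1 q = nd s q"
    using Qq s1_def by simp
  have nodes': "nodes s' = (nodes s1)(q \<mapsto> (nd s1 q)\<lparr>tree := Cs @ new_children n (ordr (nd s1 q)) C us,
      nbrs := nbrs (nd s1 q) @ [Q']\<rparr>)"
    using s' s1_def node1 Qq by (simp add: fun_upd_twist)
  have dom1: "Q' \<in> dom (nodes s1)" and "q \<in> dom (nodes s1)"
    using q s1_def by auto
  have goal': "goal s' = (if q = G then Some q else goal s1)" and opn': "opn s' = opn s1"
    using s' s1_def by simp_all
  have "parent_tree s' \<and> expansion_complete s' \<and> frontier_ok s' \<and> expansion_measure s' < expansion_measure s1"
  proof (rule expand_preserves[OF _ _ _ _ _ _ nodes' opn' goal'])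
    show "search_inv s1"
      using inv1 unfolding invariant_def by simp
    show "q \<in> set (opn s1)" and "tree (nd s1 q) = C # Cs" and "expand_tree n adj q (ordr (nd s1 q)) C us"
      using o tr us node1 s1_def by simp_all
    show "y \<in> dom (nodes s1) \<and> connected n adj q y" if "y \<in> set [Q']" for y
      using that dom1 con by simp
    show "Y \<in> set [Q']" if "gen q C = Some Y" for Y
      using that gQ by simp
  qed
  moreover have "queue_ok s'"
    using invariantD(4)[OF inv1] \<open>q \<in> dom (nodes s1)\<close> nodes' s' s1_def unfolding queue_ok_def by auto
  moreover have "consistent s'"
  proof (rule consistent_expand[OF invariantD(5)[OF inv1] \<open>q \<in> dom (nodes s1)\<close> nodes'])
    show "fst ` set (dq s1) \<subseteq> fst ` set (dq s')"
      using s' s1_def by simp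
    show "gof s1 y \<le> gof s1 q + c q y \<or> q \<in> fst ` set (dq s')" if "y \<in> set [Q']" for y
      using that node1 Qq s1_def by (simp add: gof_def)
  qed
  ultimately show ?thesis
    using less1 unfolding invariant_def search_inv_def by auto
qed

lemma relax_single_lowered:
  assumes lower: "gof s fr + c fr t < gof s t"
  defines "s' \<equiv> relax c h fr [t] s"
  shows "nodes s' = (nodes s)(t \<mapsto> (nd s t)\<lparr>gval := gof s fr + c fr t, par := Some fr\<rparr>)"
    and "dq s' = (t, gof s fr + c fr t) # dq s" and "goal s' = goal s" and "in_dijk s' = in_dijk s"
    and "set (opn s) \<subseteq> set (opn s')" and "set (opn s') \<subseteq> insert t (set (opn s))"
    and "t \<notin> set (opn s') \<Longrightarrow> goal s = Some G \<Longrightarrow> fof h s' G \<le> fof h s' t"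
proof -
  define g' where "g' = gof s fr + c fr t"
  define s1 where "s1 = s\<lparr>nodes := (nodes s)(t \<mapsto> (nd s t)\<lparr>gval := g', par := Some fr\<rparr>), dq := (t, g') # dq s\<rparr>"
  define push where "push \<longleftrightarrow> (\<exists>qg. goal s1 = Some qg \<and> fof h s1 t < fof h s1 qg)"
  have s': "s' = (if push then s1\<lparr>opn := t # opn s1\<rparr> else s1)"
    using lower unfolding s'_def s1_def g'_def push_def by (simp add: Let_def)
  have sel: "nodes s' = nodes s1" "dq s' = dq s1" "goal s' = goal s1" "in_dijk s' = in_dijk s1"
    "opn s' = (if push then t # opn s else opn s)"
    unfolding s' s1_def by simp_all
  show "nodes s' = (nodes s)(t \<mapsto> (nd s t)\<lparr>gval := gof s fr + c fr t, par := Some fr\<rparr>)"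
    and "dq s' = (t, gof s fr + c fr t) # dq s" and "goal s' = goal s" and "in_dijk s' = in_dijk s"
    and "set (opn s) \<subseteq> set (opn s')" and "set (opn s') \<subseteq> insert t (set (opn s))"
    using sel unfolding s1_def g'_def by auto
  show "fof h s' G \<le> fof h s' t" if "t \<notin> set (opn s')" and "goal s = Some G"
  proof -
    have "\<not> push"
      using that(1) sel(5) by auto
    then have "\<not> fof h s1 t < fof h s1 G"
      using that(2) unfolding push_def s1_def by simp
    then show ?thesis
      using same_nodes(2)[OF sel(1)] by simp
  qed
qed

lemma gof_lower:
  "nodes s' = (nodes s)(t \<mapsto> (nd s t)\<lparr>gval := g', par := p\<rparr>) \<Longrightarrow>
    gof s' x = (if x = t then g' else gof s x)"
  unfolding gof_def by simp

lemma parent_tree_lower: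
  assumes pt: "parent_tree s" and fr: "fr \<in> dom (nodes s)" and t: "t \<in> dom (nodes s)"
    and con: "connected n adj fr t" and lower: "gof s fr + c fr t < gof s t"
    and nodes': "nodes s' = (nodes s)(t \<mapsto> (nd s t)\<lparr>gval := gof s fr + c fr t, par := Some fr\<rparr>)"
  shows "parent_tree s'"
proof (rule parent_tree_update[OF pt fr con _ nodes'])
  have "0 \<le> gof s fr" and "0 \<le> c fr t"
    using costs_nonneg parent_treeD(1,2)[OF pt] fr t cost_nonneg by simp_all
  then show "t \<noteq> S"
    using lower parent_treeD(5)[OF pt] by auto
  show "(t, fr) \<notin> (parent_rel s)\<^sup>*"
    using parent_rel_gof_mono[OF pt] lower \<open>0 \<le> c fr t\<close> by force
qed (use lower in simp_all)

lemma cost_measure_lower: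
  assumes fin: "finite (dom (nodes s))" and dom': "dom (nodes s') = dom (nodes s)"
    and t: "t \<in> dom (nodes s)" and le: "\<And>x. gof s' x \<le> gof s x"
    and less: "gof s' t < gof s t" and costs: "gof s' t \<in> costs"
  shows "cost_measure s' < cost_measure s"
  unfolding cost_measure_def dom'
proof (rule sum_strict_mono_ex1[OF fin])
  have sub: "{v \<in> costs. v < gof s' x} \<subseteq> {v \<in> costs. v < gof s x}" for x
    using le[of x] by auto
  show "\<forall>x\<in>dom (nodes s). card {v \<in> costs. v < gof s' x} \<le> card {v \<in> costs. v < gof s x}"
    using card_mono[OF finite_costs_below sub] by blast
  have "{v \<in> costs. v < gof s' t} \<subset> {v \<in> costs. v < gof s t}"
    using sub[of t] less costs by auto
  then show "\<exists>x\<in>dom (nodes s). card {v \<in> costs. v < gof s' x} < card {v \<in> costs. v < gof s x}"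
    using t psubset_card_mono[OF finite_costs_below] by blast
qed

lemma frontier_ok_lower:
  assumes fo: "frontier_ok s" and t: "t \<in> dom (nodes s)" and lower: "g' < gof s t"
    and nodes': "nodes s' = (nodes s)(t \<mapsto> (nd s t)\<lparr>gval := g', par := p\<rparr>)"
    and goal': "goal s' = goal s"
    and opn': "set (opn s) \<subseteq> set (opn s')" "set (opn s') \<subseteq> insert t (set (opn s))"
    and unpushed: "t \<notin> set (opn s') \<Longrightarrow> goal s = Some G \<Longrightarrow> fof h s' G \<le> fof h s' t"
  shows "frontier_ok s'"
proof (rule frontier_okI)
  note fo = frontier_okD[OF fo]
  have dom': "dom (nodes s') = dom (nodes s)"
    using nodes' t by auto
  show "set (opn s') \<subseteq> dom (nodes s')"
    using fo(1) opn'(2) t dom' by auto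
  show "goal s' = None \<or> goal s' = Some G" and "goal s' \<noteq> None \<Longrightarrow> G \<in> dom (nodes s')"
    using fo(2,3) goal' dom' by simp_all
  show "goal s' \<noteq> None" if "G \<in> dom (nodes s')" and "G \<notin> set (opn s')"
    using that fo(4) goal' dom' opn'(1) by auto
  show "tree (nd s' x) = [] \<or> (goal s' \<noteq> None \<and> fof h s' G \<le> fof h s' x)"
    if x: "x \<in> dom (nodes s')" "x \<notin> set (opn s')" for x
  proof (cases "tree (nd s x) = []")
    case True
    then show ?thesis
      using nodes' by (cases "x = t") simp_all
  next
    case False
    have "x \<in> dom (nodes s)" and "x \<notin> set (opn s)"
      using x dom' opn'(1) by auto
    then have goal: "goal s = Some G" and f: "fof h s G \<le> fof h s x"
      using fo(2) fo(5)[of x] False by auto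
    have "fof h s' G \<le> fof h s' x"
      using unpushed[OF _ goal] x(2) f gof_lower[OF nodes'] lower
      unfolding fof_def by (cases "x = t") auto
    then show ?thesis
      using goal goal' by simp
  qed
qed

lemma consistent_except_lower:
  assumes cons: "consistent_except s fr (insert t T)" and t: "t \<in> dom (nodes s)" and tfr: "t \<noteq> fr"
    and lower: "gof s fr + c fr t < gof s t"
    and nodes': "nodes s' = (nodes s)(t \<mapsto> (nd s t)\<lparr>gval := gof s fr + c fr t, par := Some fr\<rparr>)"
    and dq': "dq s' = (t, gof s fr + c fr t) # dq s"
  shows "consistent_except s' fr T"
  unfolding consistent_except_def
proof (intro ballI)
  note gof' = gof_lower[OF nodes']
  fix x y assume x: "x \<in> dom (nodes s')" and y: "y \<in> set (nbrs (nd s' x))"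
  show "gof s' y \<le> gof s' x + c x y \<or> x \<in> fst ` set (dq s') \<or> (x = fr \<and> y \<in> T)"
  proof (cases "x = fr \<and> y = t")
    case True
    then show ?thesis
      using gof' tfr by simp
  next
    case False
    have "gof s y \<le> gof s x + c x y \<or> x \<in> fst ` set (dq s) \<or> (x = fr \<and> y \<in> insert t T)"
      using cons x y nodes' t unfolding consistent_except_def by (simp split: if_splits)
    then show ?thesis
    proof (elim disjE)
      assume "gof s y \<le> gof s x + c x y"
      then show ?thesis
        using gof' lower dq' by (cases "x = t") auto
    qed (use False dq' in auto)
  qed
qed

lemma relax_single_preserves:
  assumes si: "search_inv s" and dj: "in_dijk s" and fr: "fr \<in> dom (nodes s)"
    and t: "t \<in> set (nbrs (nd s fr))" and cons: "consistent_except s fr (insert t T)"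
  defines "s' \<equiv> relax c h fr [t] s"
  shows "search_inv s' \<and> in_dijk s' \<and> consistent_except s' fr T \<and>
    dom (nodes s') = dom (nodes s) \<and> nbrs (nd s' fr) = nbrs (nd s fr) \<and>
    expansion_measure s' = expansion_measure s \<and> (s' = s \<or> cost_measure s' < cost_measure s)"
proof (cases "gof s fr + c fr t < gof s t")
  case False
  then have "s' = s"
    unfolding s'_def by simp
  moreover have "consistent_except s fr T"
    unfolding consistent_except_def
  proof (intro ballI)
    fix x y assume "x \<in> dom (nodes s)" and "y \<in> set (nbrs (nd s x))"
    then have "gof s y \<le> gof s x + c x y \<or> x \<in> fst ` set (dq s) \<or> (x = fr \<and> y \<in> insert t T)"
      using cons unfolding consistent_except_def by blast
    then show "gof s y \<le> gof s x + c x y \<or> x \<in> fst ` set (dq s) \<or> (x = fr \<and> y \<in> T)"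
      using False by auto
  qed
  ultimately show ?thesis
    using si dj by simp
next
  case lower: True
  note new = relax_single_lowered[OF lower, folded s'_def]
  have I: "parent_tree s" "expansion_complete s" "frontier_ok s" "queue_ok s"
    using si unfolding search_inv_def by simp_all
  have t_dom: "t \<in> dom (nodes s)" and con: "connected n adj fr t"
    using expansion_completeD(4)[OF I(2) fr t] by simp_all
  have len: "length fr = n" "length t = n"
    using parent_treeD(1)[OF I(1)] fr t_dom by simp_all
  have tfr: "t \<noteq> fr"
    using lower cost_nonneg[OF len] by auto
  have dom': "dom (nodes s') = dom (nodes s)"
    using new(1) t_dom by auto
  have fields: "ordr (nd s' x) = ordr (nd s x)" "tree (nd s' x) = tree (nd s x)" "nbrs (nd s' x) = nbrs (nd s x)" for x
    using new(1) by simp_all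
  have gof_le: "gof s' x \<le> gof s x" for x
    using gof_lower[OF new(1)] lower by simp
  have "parent_tree s'"
    using parent_tree_lower[OF I(1) fr t_dom con lower new(1)] .
  moreover have "expansion_complete s'"
    using I(2) dom' fields by (subst expansion_complete_cong) simp_all
  moreover have "frontier_ok s'"
    using frontier_ok_lower[OF I(3) t_dom lower new(1,3,5,6,7)] .
  moreover have "queue_ok s'"
    using I(4) t_dom new(2,4) dj dom' unfolding queue_ok_def by auto
  moreover have "consistent_except s' fr T"
    using consistent_except_lower[OF cons t_dom tfr lower new(1,2)] .
  moreover have "expansion_measure s' = expansion_measure s"
    unfolding expansion_measure_def dom' fields ..
  moreover have "cost_measure s' < cost_measure s"
    using cost_measure_lower[OF finite_explored[OF I(1)] dom' t_dom gof_le] gof_lower[OF new(1)] lower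
      costs_add[OF parent_treeD(2)[OF I(1) fr] len] by simp
  ultimately show ?thesis
    unfolding search_inv_def using dj new(4) dom' fields by simp
qed

lemma relax_preserves:
  assumes "search_inv s" and "in_dijk s" and "fr \<in> dom (nodes s)"
    and "set ts \<subseteq> set (nbrs (nd s fr))" and "consistent_except s fr (set ts \<union> T)"
  defines "s' \<equiv> relax c h fr ts s"
  shows "search_inv s' \<and> in_dijk s' \<and> consistent_except s' fr T \<and>
    expansion_measure s' = expansion_measure s \<and> (s' = s \<or> cost_measure s' < cost_measure s)"
  using assms(1-5) unfolding s'_def
proof (induction ts arbitrary: s)
  case (Cons t ts)
  let ?s1 = "relax c h fr [t] s"
  have "consistent_except s fr (insert t (set ts \<union> T))"
    using Cons.prems(5) by simp
  then have step: "search_inv ?s1 \<and> in_dijk ?s1 \<and> consistent_except ?s1 fr (set ts \<union> T) \<and>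
      dom (nodes ?s1) = dom (nodes s) \<and> nbrs (nd ?s1 fr) = nbrs (nd s fr) \<and>
      expansion_measure ?s1 = expansion_measure s \<and> (?s1 = s \<or> cost_measure ?s1 < cost_measure s)"
    using Cons.prems(1-4) by (intro relax_single_preserves) simp_all
  then have "fr \<in> dom (nodes ?s1)" and "set ts \<subseteq> set (nbrs (nd ?s1 fr))"
    using Cons.prems(3,4) by simp_all
  then have IH: "search_inv (relax c h fr ts ?s1) \<and> in_dijk (relax c h fr ts ?s1) \<and>
      consistent_except (relax c h fr ts ?s1) fr T \<and>
      expansion_measure (relax c h fr ts ?s1) = expansion_measure ?s1 \<and>
      (relax c h fr ts ?s1 = ?s1 \<or> cost_measure (relax c h fr ts ?s1) < cost_measure ?s1)"
    using step by (intro Cons.IH) simp_all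
  have "relax c h fr (t # ts) s = relax c h fr ts ?s1"
    by simp
  then show ?case
    using IH step by auto
qed simp

lemma consistent_except_dequeue:
  assumes cons: "consistent s"
  shows "consistent_except (s\<lparr>dq := remove1 (q, k) (dq s)\<rparr>) q (set (nbrs (nd s q)))"
  unfolding consistent_except_def
proof (intro ballI)
  let ?s0 = "s\<lparr>dq := remove1 (q, k) (dq s)\<rparr>"
  fix x y assume x: "x \<in> dom (nodes ?s0)" and y: "y \<in> set (nbrs (nd ?s0 x))"
  have old: "gof s y \<le> gof s x + c x y \<or> x \<in> fst ` set (dq s)"
    using consistentD[OF cons] x y by simp
  have keep: "x \<in> fst ` set (dq ?s0)" if "x \<noteq> q" and key: "x \<in> fst ` set (dq s)"
  proof -
    obtain k' where "(x, k') \<in> set (dq s)"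
      using key by force
    then have "(x, k') \<in> set (dq ?s0)"
      using \<open>x \<noteq> q\<close> by (simp add: in_set_remove1)
    then show ?thesis
      by force
  qed
  show "gof ?s0 y \<le> gof ?s0 x + c x y \<or> x \<in> fst ` set (dq ?s0) \<or> (x = q \<and> y \<in> set (nbrs (nd s q)))"
    using old keep y same_nodes(1)[of ?s0 s] by (cases "x = q") auto
qed

lemma dijk_pop_preserves:
  assumes inv: "invariant s" and dj: "in_dijk s" and qk: "(q, k) \<in> set (dq s)"
    and s': "s' = relax c h q (nbrs (nd s q)) (s\<lparr>dq := remove1 (q, k) (dq s)\<rparr>)"
  shows "invariant s' \<and> (s', s) \<in> termination_rel"
proof -
  let ?s0 = "s\<lparr>dq := remove1 (q, k) (dq s)\<rparr>"
  note I = invariantD[OF inv]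
  have same: "nodes ?s0 = nodes s"
    by simp
  have "q \<in> fst ` set (dq s)"
    using qk by (rule rev_image_eqI) simp
  then have q: "q \<in> dom (nodes s)"
    using I(4) unfolding queue_ok_def by blast
  have "fst ` set (dq ?s0) \<subseteq> fst ` set (dq s)"
    by (intro image_mono) (simp add: set_remove1_subset)
  then have "queue_ok ?s0"
    using I(4) dj unfolding queue_ok_def by simp
  moreover have "frontier_ok ?s0"
    using I(3) unfolding frontier_ok_def same_nodes(2)[OF same] by simp
  ultimately have si0: "search_inv ?s0"
    using I(1,2) same_nodes(3,4)[OF same] unfolding search_inv_def by simp
  have R: "search_inv s' \<and> in_dijk s' \<and> consistent_except s' q {} \<and>
      expansion_measure s' = expansion_measure ?s0 \<and> (s' = ?s0 \<or> cost_measure s' < cost_measure ?s0)"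
  proof -
    have cons0: "consistent_except ?s0 q (set (nbrs (nd ?s0 q)) \<union> {})"
      using consistent_except_dequeue[OF I(5), of q k] by simp
    show ?thesis
      unfolding s' using relax_preserves[OF si0 _ _ _ cons0] q dj by simp
  qed
  have "0 < length (dq s)"
    using qk by (rule length_pos_if_in_set)
  then have "dijkstra_measure ?s0 < dijkstra_measure s"
    using dj qk by (simp add: dijkstra_measure_def length_remove1)
  then have "(s', s) \<in> termination_rel"
    using R same_nodes(5,6)[OF same] unfolding termination_rel_def by auto
  moreover have "invariant s'"
    using R unfolding invariant_def consistent_except_empty by simp
  ultimately show ?thesis
    by simp
qed

lemma dijk_end_preserves:
  assumes inv: "invariant s" and dj: "in_dijk s" and empty: "dq s = []"
  shows "invariant (s\<lparr>in_dijk := False\<rparr>) \<and> (s\<lparr>in_dijk := False\<rparr>, s) \<in> termination_rel"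
proof -
  have same: "nodes (s\<lparr>in_dijk := False\<rparr>) = nodes s"
    by simp
  show ?thesis
    using inv empty dj same_nodes[OF same]
    unfolding invariant_def search_inv_def frontier_ok_def queue_ok_def consistent_def
      termination_rel_def dijkstra_measure_def
    by simp
qed

lemma lstep_preserves:
  assumes inv: "invariant s" and step: "lstep n adj G c h gen s s'"
  shows "invariant s' \<and> (s', s) \<in> termination_rel"
  using step
proof cases
  case (pop_goal q rest gl qg)
  then have same: "nodes s' = nodes s"
    by simp
  have "invariant s'"
    using pop_preserves[OF inv pop_goal(3,4)] pop_goal by blast
  moreover have "(s', s) \<in> termination_rel"
    using pop_goal same_nodes(5,6)[OF same] unfolding termination_rel_def dijkstra_measure_def by simp
  ultimately show ?thesis ..
next
  case (pop_empty q rest gl)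
  then have same: "nodes s' = nodes s"
    by simp
  have "invariant s'"
    using pop_preserves[OF inv pop_empty(3,4)] pop_empty by blast
  moreover have "(s', s) \<in> termination_rel"
    using pop_empty same_nodes(5,6)[OF same] unfolding termination_rel_def dijkstra_measure_def by simp
  ultimately show ?thesis ..
next
  case (gen_none q rest gl N C Cs us)
  then show ?thesis
    using gen_none_preserves[OF inv, of q rest C Cs us s'] by (simp add: termination_rel_def)
next
  case (gen_explored q rest gl N C Cs us Q')
  then show ?thesis
    using gen_explored_preserves[OF inv, of q rest C Cs us Q' s'] by (simp add: termination_rel_def domIff)
next
  case (gen_new q rest gl N C Cs us Q' o')
  then show ?thesis
    using gen_new_preserves[OF inv, of q rest C Cs us Q' o' s'] by (simp add: termination_rel_def)
next
  case (dijk_pop q k)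
  then show ?thesis
    using dijk_pop_preserves[OF inv dijk_pop(2,3,1)] by simp
next
  case dijk_end
  then show ?thesis
    using dijk_end_preserves[OF inv dijk_end(2,3)] by simp
qed

lemma reachable_invariant:
  assumes "(lstep n adj G c h gen)\<^sup>*\<^sup>* (init_state S o0) s" and "distinct o0" and "set o0 = {..<n}"
  shows "invariant s"
  using assms(1)
proof (induction rule: rtranclp_induct)
  case base
  show ?case
    using invariant_init[OF assms(2,3)] .
next
  case (step s s')
  then show ?case
    using lstep_preserves[OF step.IH step.hyps(2)] by simp
qed

lemma no_infinite_run:
  assumes "distinct o0" and "set o0 = {..<n}"
  shows "\<nexists>f. f 0 = init_state S o0 \<and> (\<forall>k. lstep n adj G c h gen (f k) (f (Suc k)))"
proof
  assume "\<exists>f. f 0 = init_state S o0 \<and> (\<forall>k. lstep n adj G c h gen (f k) (f (Suc k)))"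
  then obtain f where f0: "f 0 = init_state S o0" and run: "\<And>k. lstep n adj G c h gen (f k) (f (Suc k))"
    by blast
  have inv: "invariant (f k)" for k
  proof (induction k)
    case 0
    show ?case
      using f0 invariant_init[OF assms] by simp
  next
    case (Suc k)
    show ?case
      using lstep_preserves[OF Suc.IH run] by simp
  qed
  have "(f (Suc k), f k) \<in> termination_rel" for k
    using lstep_preserves[OF inv run] by simp
  moreover have "wf termination_rel"
    unfolding termination_rel_def by simp
  ultimately show False
    using wf_iff_no_infinite_down_chain by blast
qed

section \<open>Final states\<close>

lemma parent_chain_exists:
  assumes pt: "parent_tree s" and x: "x \<in> dom (nodes s)"
  shows "\<exists>P. parent_chain s P \<and> hd P = S \<and> last P = x \<and> is_path n adj P \<and> path_cost c P \<le> gof s x"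
proof -
  note T = parent_treeD[OF pt]
  have "parent_rel s \<subseteq> dom (nodes s) \<times> dom (nodes s)"
    using T(6) unfolding parent_rel_def by auto
  then have "finite (parent_rel s)"
    using finite_explored[OF pt] finite_subset by blast
  then have wf: "wf (parent_rel s)"
    using finite_acyclic_wf T(7) by blast
  show ?thesis
    using x
  proof (induction x rule: wf_induct_rule[OF wf])
    case (1 x)
    show ?case
    proof (cases "par (nd s x)")
      case None
      then have "x = S"
        using T(3)[OF "1.prems"] by simp
      then show ?thesis
        using None "1.prems" T(5)
        by (intro exI[of _ "[S]"]) (auto simp: parent_chain_def is_path_def path_cost_def)
    next
      case (Some p)
      then have px: "(p, x) \<in> parent_rel s"
        using "1.prems" unfolding parent_rel_def by simp
      note p = T(6)[OF px]
      obtain P where P: "parent_chain s P" "hd P = S" "last P = p" "is_path n adj P" "path_cost c P \<le> gof s p"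
        using "1.IH"[OF px] p by blast
      have "P \<noteq> []"
        using P(1) unfolding parent_chain_def by simp
      then have "parent_chain s (P @ [x]) \<and> hd (P @ [x]) = S \<and> last (P @ [x]) = x \<and>
          is_path n adj (P @ [x]) \<and> path_cost c (P @ [x]) \<le> gof s x"
        using parent_chain_snoc[OF P(1)] is_path_snoc[OF P(4)] path_cost_snoc[of P c x] P p
          Some "1.prems" by auto
      then show ?thesis
        by blast
    qed
  qed
qed

lemma final_covers_path:
  assumes inv: "invariant s" and fin: "is_final s"
    and P: "is_path n adj P" "hd P = S" "last P = G" and i: "i < length P"
  shows "(goal s = Some G \<and> gof s G \<le> path_cost c P) \<or>
    (P ! i \<in> dom (nodes s) \<and> gof s (P ! i) \<le> path_cost c (take (Suc i) P))"
  using i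
proof (induction i)
  case 0
  have "P \<noteq> []"
    using P(1) unfolding is_path_def by simp
  then have "P ! 0 = S" and "path_cost c (take (Suc 0) P) = 0"
    using P(2) by (simp_all add: hd_conv_nth path_cost_def)
  then show ?case
    using parent_treeD(4,5)[OF invariantD(1)[OF inv]] by simp
next
  case (Suc i)
  note I = invariantD[OF inv]
  have final: "opn s = []" "dq s = []"
    using fin I(4) unfolding is_final_def queue_ok_def by simp_all
  have step: "connected n adj (P ! i) (P ! Suc i)"
    using P(1) Suc.prems unfolding is_path_def by simp
  have "(goal s = Some G \<and> gof s G \<le> path_cost c P) \<or>
      (P ! i \<in> dom (nodes s) \<and> gof s (P ! i) \<le> path_cost c (take (Suc i) P))"
    using Suc.IH Suc.prems by simp
  then show ?case
  proof (elim disjE conjE)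
    assume x: "P ! i \<in> dom (nodes s)" and gx: "gof s (P ! i) \<le> path_cost c (take (Suc i) P)"
    consider "tree (nd s (P ! i)) = []" | "goal s = Some G" "fof h s G \<le> fof h s (P ! i)"
      using frontier_okD(2,5)[OF I(3)] x final(1) by fastforce
    then show ?thesis
    proof cases
      case 1
      then have y: "P ! Suc i \<in> set (nbrs (nd s (P ! i)))"
        using expansion_completeD(5)[OF I(2) x step] by simp
      then have "gof s (P ! Suc i) \<le> gof s (P ! i) + c (P ! i) (P ! Suc i)"
        using consistentD[OF I(5) x] final(2) by simp
      then show ?thesis
        using expansion_completeD(4)[OF I(2) x y] gx path_cost_take_Suc[OF Suc.prems] by simp
    next
      case 2
      have "is_path n adj (drop i P)" and "hd (drop i P) = P ! i" and "last (drop i P) = G"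
        using is_path_drop[OF P(1)] Suc.prems P(3) by (simp_all add: hd_drop_conv_nth)
      then have "h (P ! i) \<le> path_cost c (drop i P)"
        using heuristic_admissible unfolding admissible_def by blast
      then have "gof s G \<le> path_cost c P"
        using 2(2) gx heuristic_goal path_cost_take_drop[of i P c] Suc.prems
        unfolding fof_def by simp
      then show ?thesis
        using 2(1) by simp
    qed
  qed simp
qed

lemma final_goal_optimal:
  assumes inv: "invariant s" and fin: "is_final s" and P: "is_solution n adj S G P"
  shows "goal s = Some G \<and> gof s G \<le> path_cost c P"
proof -
  have path: "is_path n adj P" "hd P = S" "last P = G"
    using P unfolding is_solution_def by simp_all
  then have "P \<noteq> []"
    unfolding is_path_def by simp
  then have last: "P ! (length P - 1) = G" and all: "take (Suc (length P - 1)) P = P"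
    using path(3) by (simp_all add: last_conv_nth)
  have "(goal s = Some G \<and> gof s G \<le> path_cost c P) \<or> (G \<in> dom (nodes s) \<and> gof s G \<le> path_cost c P)"
    using final_covers_path[OF inv fin path, of "length P - 1"] \<open>P \<noteq> []\<close> last all by simp
  moreover have "goal s = Some G" if "G \<in> dom (nodes s)"
    using frontier_okD(2,4)[OF invariantD(3)[OF inv]] that fin unfolding is_final_def by auto
  ultimately show ?thesis
    by blast
qed

lemma final_correct:
  assumes inv: "invariant s" and fin: "is_final s"
  shows "((\<exists>P. is_solution n adj S G P) \<longrightarrow>
            (\<exists>P. returned_path s P \<and> is_solution n adj S G P \<and>
                 (\<forall>P'. is_solution n adj S G P' \<longrightarrow> path_cost c P \<le> path_cost c P')))
       \<and> ((\<nexists>P. is_solution n adj S G P) \<longrightarrow> goal s = None)"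
proof (intro conjI impI)
  note I = invariantD[OF inv]
  assume "\<exists>P. is_solution n adj S G P"
  then obtain P0 where "is_solution n adj S G P0"
    by blast
  then have goal: "goal s = Some G"
    using final_goal_optimal[OF inv fin] by blast
  then obtain P where P: "parent_chain s P" "hd P = S" "last P = G" "is_path n adj P" "path_cost c P \<le> gof s G"
    using parent_chain_exists[OF I(1)] frontier_okD(3)[OF I(3)] by blast
  have "returned_path s P" and "is_solution n adj S G P"
    using P goal unfolding returned_path_iff is_solution_def by simp_all
  moreover have "path_cost c P \<le> path_cost c P'" if "is_solution n adj S G P'" for P'
    using final_goal_optimal[OF inv fin that] P(5) by simp
  ultimately show "\<exists>P. returned_path s P \<and> is_solution n adj S G P \<and>
      (\<forall>P'. is_solution n adj S G P' \<longrightarrow> path_cost c P \<le> path_cost c P')"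
    by blast
next
  note I = invariantD[OF inv]
  assume none: "\<nexists>P. is_solution n adj S G P"
  show "goal s = None"
  proof (rule ccontr)
    assume "goal s \<noteq> None"
    then obtain P where "hd P = S" "last P = G" "is_path n adj P"
      using parent_chain_exists[OF I(1)] frontier_okD(3)[OF I(3)] by blast
    then show False
      using none unfolding is_solution_def by blast
  qed
qed

end

theorem theorem1:
  fixes adj :: "'v::finite \<Rightarrow> 'v \<Rightarrow> bool" and n :: nat and S G :: "'v list"
    and c :: "'v list \<Rightarrow> 'v list \<Rightarrow> real" and h :: "'v list \<Rightarrow> real"
    and gen :: "'v list \<Rightarrow> (nat \<times> 'v) list \<Rightarrow> 'v list option"
    and o0 :: "nat list"
  assumes "symp adj"
    and "length S = n" and "distinct S" and "length G = n" and "distinct G"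
    and "\<forall>X Y. length X = n \<longrightarrow> length Y = n \<longrightarrow> c X Y \<ge> 0"
    and "\<forall>Q. length Q = n \<longrightarrow> h Q \<ge> 0"
    and "admissible n adj G c h"
    and "valid_generator n adj gen"
    and "distinct o0" and "set o0 = {..<n}"
  shows "(\<nexists>f. f 0 = init_state S o0 \<and> (\<forall>k. lstep n adj G c h gen (f k) (f (Suc k))))
    \<and> (\<forall>s. (lstep n adj G c h gen)\<^sup>*\<^sup>* (init_state S o0) s \<longrightarrow>
           is_final s \<or> (\<exists>s'. lstep n adj G c h gen s s'))
    \<and> (\<forall>s. (lstep n adj G c h gen)\<^sup>*\<^sup>* (init_state S o0) s \<longrightarrow> is_final s \<longrightarrow>
           ((\<exists>P. is_solution n adj S G P) \<longrightarrow>
              (\<exists>P. returned_path s P \<and> is_solution n adj S G P \<and>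
                   (\<forall>P'. is_solution n adj S G P' \<longrightarrow> path_cost c P \<le> path_cost c P')))
         \<and> ((\<nexists>P. is_solution n adj S G P) \<longrightarrow> goal s = None))"
proof -
  interpret lacam adj n S G c h gen
    using assms(2,4,6-9) by unfold_locales simp_all
  have progress: "\<forall>s. (lstep n adj G c h gen)\<^sup>*\<^sup>* (init_state S o0) s \<longrightarrow>
      is_final s \<or> (\<exists>s'. lstep n adj G c h gen s s')"
    using lstep_progress by blast
  have correct: "\<forall>s. (lstep n adj G c h gen)\<^sup>*\<^sup>* (init_state S o0) s \<longrightarrow> is_final s \<longrightarrow>
      ((\<exists>P. is_solution n adj S G P) \<longrightarrow>
        (\<exists>P. returned_path s P \<and> is_solution n adj S G P \<and>
             (\<forall>P'. is_solution n adj S G P' \<longrightarrow> path_cost c P \<le> path_cost c P')))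
      \<and> ((\<nexists>P. is_solution n adj S G P) \<longrightarrow> goal s = None)"
    using final_correct reachable_invariant[OF _ assms(10,11)] by blast
  show ?thesis
    using no_infinite_run[OF assms(10,11)] progress correct by blast
qed

end
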